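(* Consider the size process of active clusters of the GFI process with parameters $\beta,\theta,\gamma>0$ and its first moment operators $M_tf(n)=\mathbb{E}_{\delta_n}[\langle X_t,f\rangle]$ for non-negative $f$. Then: (i) for all $p\ge1$, $t\ge0$, $n\ge1$: $M_t([x^p])(n)\le e^{(2^{p-1}p\beta-\theta)t}n^p$, where $[x^p](n)=n^p$; (ii) for every $f\in\mathcal{B}$, with $f_+,f_-$ its positive and negative parts, $M_tf_+(n)$ and $M_tf_-(n)$ are well defined and finite for all $t\ge0,n\ge1$, so one can set $M_tf(n)=\mathbb{E}_{\delta_n}[\langle X_t,f\rangle]:=M_tf_+(n)-M_tf_-(n)$; (iii) $(M_t)_{t\ge0}$ is a positive semigroup on $\mathcal{B}$, and for every $f\in\mathcal{B}$, $t\ge0$, $n\ge1$, $$\frac{d}{dt}M_tf(n)=M_t(\mathcal{L}f)(n),$$ where the linear operator $\mathcal{L}:\mathcal{B}\to\mathcal{B}$ is $$\mathcal{L}f(n)=\beta n(f(n+1)-f(n))-\theta nf(n)+\sum_{j=1}^{n-1}\frac{\gamma n}{j(j+1)}\big(f(j)+f(n-j)-f(n)\big).$$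
   Context: GFI process with parameters $\beta,\theta,\gamma>0$: each active vertex attaches a new active vertex by an open edge at rate $\beta$, each open edge closes at rate $\gamma$, each active vertex is confirmed at rate $\theta$ upon which its whole cluster (maximal set connected by open edges) becomes inactive. $X_t=\sum_{\mathcal{C}\text{ active at }t}\delta_{|\mathcal{C}|}$ and $\langle X_t,f\rangle=\sum_{\mathcal{C}}f(|\mathcal{C}|)$. $\mathbb{E}_{\delta_n}$ is the expectation for the process started from a single active cluster which is a uniform random recursive tree of size $n$ (all edges open). Equivalently, in the size process each active cluster of size $n$ independently: becomes inactive at rate $\theta n$; becomes of size $n+1$ at rate $\beta n$; splits into two clusters of sizes $n-j$ and $j$ at rate $\gamma n/(j(j+1))$, $1\le j\le n-1$. $\mathcal{B}$ is the set of functions $f:\mathbb{N}_+\to\mathbb{R}$ such that $\sup_{n\ge1}|f(n)|/n^p<\infty$ for some $p>0$. *)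

theory Defs
  imports "HOL-Probability.Probability" "HOL-Library.Multiset"
begin

text \<open>A state is a finite
multiset of (positive) cluster sizes.\<close>

definition gfi_rate :: "real \<Rightarrow> real \<Rightarrow> real \<Rightarrow> nat multiset \<Rightarrow> nat multiset \<Rightarrow> real" where
  "gfi_rate \<beta> \<theta> \<gamma> X Y =
     (\<Sum>n\<in>set_mset X. real (count X n) *
        (\<theta> * real n * (if Y = X - {#n#} then 1 else 0)
         + \<beta> * real n * (if Y = X - {#n#} + {#n + 1#} then 1 else 0)
         + (\<Sum>j=1..n-1. \<gamma> * real n / (real j * real (j + 1)) *
              (if Y = X - {#n#} + {#j, n - j#} then 1 else 0))))"

definition gfi_qtot :: "real \<Rightarrow> real \<Rightarrow> real \<Rightarrow> nat multiset \<Rightarrow> real" where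
  "gfi_qtot \<beta> \<theta> \<gamma> X =
     (\<Sum>n\<in>set_mset X. real (count X n) *
        (\<theta> * real n + \<beta> * real n + (\<Sum>j=1..n-1. \<gamma> * real n / (real j * real (j + 1)))))"

text \<open>Iterates of the backward Kolmogorov integral equation: the k-th iterate is the
probability to be in Y at time t having made fewer than k jumps.\<close>
fun gfi_trans_approx ::
  "real \<Rightarrow> real \<Rightarrow> real \<Rightarrow> nat \<Rightarrow> real \<Rightarrow> nat multiset \<Rightarrow> nat multiset \<Rightarrow> ennreal" where
  "gfi_trans_approx \<beta> \<theta> \<gamma> 0 t X Y = 0"
| "gfi_trans_approx \<beta> \<theta> \<gamma> (Suc k) t X Y =
     (if X = Y then ennreal (exp (- gfi_qtot \<beta> \<theta> \<gamma> X * t)) else 0)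
     + (\<integral>\<^sup>+ s\<in>{0..t}. ennreal (exp (- gfi_qtot \<beta> \<theta> \<gamma> X * s)) *
          (\<integral>\<^sup>+ Z. ennreal (gfi_rate \<beta> \<theta> \<gamma> X Z) * gfi_trans_approx \<beta> \<theta> \<gamma> k (t - s) Z Y
             \<partial>count_space UNIV) \<partial>lborel)"

text \<open>Transition function of the (minimal) continuous-time Markov chain.\<close>
definition gfi_trans :: "real \<Rightarrow> real \<Rightarrow> real \<Rightarrow> real \<Rightarrow> nat multiset \<Rightarrow> nat multiset \<Rightarrow> ennreal" where
  "gfi_trans \<beta> \<theta> \<gamma> t X Y = (SUP k. gfi_trans_approx \<beta> \<theta> \<gamma> k t X Y)"

definition pairing :: "nat multiset \<Rightarrow> (nat \<Rightarrow> real) \<Rightarrow> real" where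
  "pairing Y f = sum_mset (image_mset f Y)"

definition gfi_Mplus :: "real \<Rightarrow> real \<Rightarrow> real \<Rightarrow> (nat \<Rightarrow> real) \<Rightarrow> real \<Rightarrow> nat \<Rightarrow> ennreal" where
  "gfi_Mplus \<beta> \<theta> \<gamma> f t n =
     (\<integral>\<^sup>+ Y. gfi_trans \<beta> \<theta> \<gamma> t {#n#} Y * ennreal (pairing Y f) \<partial>count_space UNIV)"

definition pos_part :: "(nat \<Rightarrow> real) \<Rightarrow> nat \<Rightarrow> real" where
  "pos_part f = (\<lambda>m. max (f m) 0)"

definition neg_part :: "(nat \<Rightarrow> real) \<Rightarrow> nat \<Rightarrow> real" where
  "neg_part f = (\<lambda>m. max (- f m) 0)"

definition gfi_M :: "real \<Rightarrow> real \<Rightarrow> real \<Rightarrow> (nat \<Rightarrow> real) \<Rightarrow> real \<Rightarrow> nat \<Rightarrow> real" where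
  "gfi_M \<beta> \<theta> \<gamma> f t n =
     enn2real (gfi_Mplus \<beta> \<theta> \<gamma> (pos_part f) t n) - enn2real (gfi_Mplus \<beta> \<theta> \<gamma> (neg_part f) t n)"

definition classB :: "(nat \<Rightarrow> real) \<Rightarrow> bool" where
  "classB f \<longleftrightarrow> (\<exists>p>0. \<exists>C. \<forall>n\<ge>1. \<bar>f n\<bar> \<le> C * real n powr p)"

definition gfi_L :: "real \<Rightarrow> real \<Rightarrow> real \<Rightarrow> (nat \<Rightarrow> real) \<Rightarrow> nat \<Rightarrow> real" where
  "gfi_L \<beta> \<theta> \<gamma> f n =
     \<beta> * real n * (f (n + 1) - f n) - \<theta> * real n * f n
     + (\<Sum>j=1..n-1. \<gamma> * real n / (real j * real (j + 1)) * (f j + f (n - j) - f n))"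

end

theory Submission
  imports Defs
begin

text \<open>The transition function of the minimal chain is the sum over \<open>k\<close> of the contributions
  \<open>p\<^sub>k\<close> of the paths with exactly \<open>k\<close> jumps. Each \<open>p\<^sub>k\<close> is a finite sum over the states reachable in
  \<open>k\<close> jumps and solves the backward equation \<open>p\<^sub>k' = - q p\<^sub>k + J p\<^sub>k\<^sub>-\<^sub>1\<close>, \<open>J\<close> the jump kernel.
  Chapman-Kolmogorov, the branching property (clusters evolve independently) and the forward
  equation hold term by term, each by uniqueness for a scalar linear ODE.
  Lyapunov functions control the sums: \<open>\<langle>X, x\<^sup>p\<rangle>\<close> gives the bound (i), and powers of the total
  size give absolute convergence for every observable of polynomial growth. The chain does not
  explode because the expected number of jumps is finite, so the total mass is \<open>1\<close>; with branching
  this reduces \<open>E\<^bsub>X\<^esub> \<langle>X\<^sub>t, f\<rangle>\<close> to single clusters, which makes \<open>M\<^sub>t\<close> a semigroup. Integrating the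
  forward equation and passing to the limit by dominated convergence gives \<open>d/dt M\<^sub>t f = M\<^sub>t (\<L> f)\<close>.\<close>

section \<open>Linear differential inequalities, integrals and series\<close>

lemma linear_ode_comparison:
  fixes y z G H :: "real \<Rightarrow> real"
  assumes y: "\<And>s. s \<ge> 0 \<Longrightarrow> (y has_real_derivative a * y s + G s) (at s within {0..})"
    and z: "\<And>s. s \<ge> 0 \<Longrightarrow> (z has_real_derivative a * z s + H s) (at s within {0..})"
    and GH: "\<And>s. s \<ge> 0 \<Longrightarrow> G s \<le> H s" and init: "y 0 \<le> z 0" and t: "t \<ge> 0"
  shows "y t \<le> z t"
proof -
  define w where "w u = exp (- (a * u)) * (z u - y u)" for u
  have w': "(w has_real_derivative exp (- (a * s)) * (H s - G s)) (at s within {0..})"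
    if "s \<ge> 0" for s
    unfolding w_def using y[OF that] z[OF that]
    by (auto intro!: derivative_eq_intros simp: algebra_simps)
  have "w 0 \<le> w t"
  proof (rule DERIV_nonneg_imp_increasing_open[OF t])
    fix x :: real assume x: "0 < x" "x < t"
    then have "at x within {0..} = at x"
      by (intro at_within_interior) auto
    then show "\<exists>D. (w has_real_derivative D) (at x) \<and> 0 \<le> D"
      using w'[of x] GH[of x] x by auto
  next
    show "continuous_on {0..t} w"
      by (rule DERIV_continuous_on[OF has_field_derivative_subset[OF w']]) auto
  qed
  with init have "0 \<le> exp (- (a * t)) * (z t - y t)"
    unfolding w_def by simp
  then show ?thesis
    by (simp add: zero_le_mult_iff)
qed

lemma linear_ode_unique:
  fixes y z G :: "real \<Rightarrow> real"
  assumes "\<And>s. s \<ge> 0 \<Longrightarrow> (y has_real_derivative a * y s + G s) (at s within {0..})"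
    and "\<And>s. s \<ge> 0 \<Longrightarrow> (z has_real_derivative a * z s + G s) (at s within {0..})"
    and "y 0 = z 0" and "t \<ge> 0"
  shows "y t = z t"
  using linear_ode_comparison[of y a G z G t] linear_ode_comparison[of z a G y G t] assms
  by force

lemma has_real_derivative_integral_from_0:
  fixes h :: "real \<Rightarrow> real"
  assumes "continuous_on {0..} h" "t \<ge> 0"
  shows "((\<lambda>s. integral {0..s} h) has_real_derivative h t) (at t within {0..})"
proof -
  have "continuous_on {0..t+1} h"
    using assms(1) by (rule continuous_on_subset) auto
  from integral_has_vector_derivative[OF this, of t]
  have "((\<lambda>s. integral {0..s} h) has_real_derivative h t) (at t within {0..t+1})"
    using assms(2) by (simp add: has_real_derivative_iff_has_vector_derivative)
  moreover have "at t within {0..t+1} = at t within {0..}"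
    by (rule at_within_nhd[of _ "ball t 1"]) (auto simp: dist_real_def)
  ultimately show ?thesis
    by simp
qed

lemma integral_reflect_atLeastAtMost_0:
  fixes h :: "real \<Rightarrow> real"
  shows "integral {0..t} (\<lambda>s. h (t - s)) = integral {0..t} h"
proof -
  have "integral {0..t} (\<lambda>s. h (t - s)) = integral {-t..0} (\<lambda>x. h (t + x))"
    using Henstock_Kurzweil_Integration.integral_reflect_real[of 0 "-t" "\<lambda>x. h (t + x)"] by simp
  also have "\<dots> = integral {-t + t..0 + t} h"
    using integral_shift_Icc_real[of "-t" 0 h t] by (simp add: comp_def)
  finally show ?thesis
    by simp
qed

lemma has_real_derivative_shift_within_nonneg:
  assumes "(f has_real_derivative D) (at (s + t) within {0..})" "t \<ge> 0"
  shows "((\<lambda>s. f (s + t)) has_real_derivative D) (at s within {0..})"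
proof -
  have "(f has_real_derivative D) (at (s + t) within (\<lambda>s. s + t) ` {0..})"
    by (rule has_field_derivative_subset[OF assms(1)]) (use assms(2) in auto)
  from DERIV_image_chain[OF this DERIV_add[OF DERIV_ident DERIV_const]]
  show ?thesis
    by (simp add: comp_def)
qed

lemma suminf_ennreal_diagonal:
  fixes a :: "nat \<Rightarrow> nat \<Rightarrow> ennreal"
  shows "(\<Sum>k. \<Sum>i\<le>k. a i (k - i)) = (\<Sum>i. \<Sum>j. a i j)"
proof -
  define F where "F S = (\<Sum>(i, j)\<in>S. a i j)" for S
  have F_mono: "F A \<le> F B" if "finite B" "A \<subseteq> B" for A B
    unfolding F_def using that by (intro sum_mono2) auto
  have triangle: "(\<Sum>k<K. \<Sum>i\<le>k. a i (k - i)) = F {(i, j). i + j < K}" for K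
    unfolding F_def by (rule sum.triangle_reindex[symmetric])
  have rows: "(\<Sum>i<N. \<Sum>j. a i j) = (SUP M. F ({..<N} \<times> {..<M}))" for N
  proof -
    have "(\<Sum>i<N. \<Sum>j. a i j) = (\<Sum>j. \<Sum>i<N. a i j)"
      by (rule suminf_sum[OF summableI, symmetric])
    then show ?thesis
      unfolding suminf_eq_SUP F_def sum.cartesian_product[symmetric]
      by (simp add: sum.swap[of _ "{..<N}"])
  qed
  have finite_triangle: "finite {(i, j). i + j < K}" for K :: nat
    by (rule finite_subset[of _ "{..<K} \<times> {..<K}"]) auto
  have "(SUP K. F {(i, j). i + j < K}) = (SUP N. SUP M. F ({..<N} \<times> {..<M}))"
  proof (rule antisym)
    show "(SUP K. F {(i, j). i + j < K}) \<le> (SUP N. SUP M. F ({..<N} \<times> {..<M}))"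
    proof (rule SUP_least)
      fix K
      have "F {(i, j). i + j < K} \<le> F ({..<K} \<times> {..<K})"
        by (rule F_mono) auto
      also have "\<dots> \<le> (SUP N. SUP M. F ({..<N} \<times> {..<M}))"
        by (intro SUP_upper2[of K]) (auto intro: SUP_upper)
      finally show "F {(i, j). i + j < K} \<le> (SUP N. SUP M. F ({..<N} \<times> {..<M}))" .
    qed
    show "(SUP N. SUP M. F ({..<N} \<times> {..<M})) \<le> (SUP K. F {(i, j). i + j < K})"
    proof (intro SUP_least)
      fix N M
      have "F ({..<N} \<times> {..<M}) \<le> F {(i, j). i + j < N + M}"
        by (rule F_mono[OF finite_triangle]) auto
      also have "\<dots> \<le> (SUP K. F {(i, j). i + j < K})"
        by (rule SUP_upper) auto
      finally show "F ({..<N} \<times> {..<M}) \<le> (SUP K. F {(i, j). i + j < K})" .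
    qed
  qed
  then show ?thesis
    unfolding suminf_eq_SUP[of "\<lambda>i. \<Sum>j. a i j"] rows[symmetric] triangle[symmetric]
      suminf_eq_SUP[of "\<lambda>k. \<Sum>i\<le>k. a i (k - i)"] .
qed

lemma powr_Suc_diff_le:
  fixes x p :: real
  assumes x: "x \<ge> 1" and p: "p \<ge> 1"
  shows "(x + 1) powr p - x powr p \<le> p * 2 powr (p - 1) * x powr (p - 1)"
proof -
  have "\<exists>z>x. z < x + 1 \<and> (x + 1) powr p - x powr p = (x + 1 - x) * (p * z powr (p - 1))"
    by (rule MVT2) (use x in \<open>auto intro!: has_real_derivative_powr\<close>)
  then obtain z where z: "x < z" "z < x + 1" "(x + 1) powr p - x powr p = p * z powr (p - 1)"
    by auto
  have "z powr (p - 1) \<le> (2 * x) powr (p - 1)"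
    using z x p by (intro powr_mono2) auto
  also have "\<dots> = 2 powr (p - 1) * x powr (p - 1)"
    using x by (simp add: powr_mult)
  finally show ?thesis
    using z(3) p by (simp add: mult_left_mono mult.assoc)
qed

lemma powr_superadditive:
  fixes a b p :: real
  assumes a: "a \<ge> 0" and b: "b \<ge> 0" and p: "p \<ge> 1"
  shows "a powr p + b powr p \<le> (a + b) powr p"
proof -
  have "a * a powr (p - 1) + b * b powr (p - 1) \<le> a * (a + b) powr (p - 1) + b * (a + b) powr (p - 1)"
    using a b p by (intro add_mono mult_left_mono powr_mono2) auto
  also have "\<dots> = (a + b) * (a + b) powr (p - 1)"
    by (simp add: algebra_simps)
  finally show ?thesis
    using powr_mult_base[of a "p - 1"] powr_mult_base[of b "p - 1"] powr_mult_base[of "a + b" "p - 1"] a b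
    by simp
qed

lemma sum_inverse_consecutive:
  "(\<Sum>j=1..m. 1 / (real j * real (j + 1))) = 1 - 1 / real (m + 1)"
proof (induction m)
  case (Suc m)
  have "(\<Sum>j=1..Suc m. 1 / (real j * real (j + 1)))
      = 1 - 1 / real (m + 1) + 1 / (real (m + 1) * real (m + 2))"
    using Suc.IH by simp
  also have "1 / (real (m + 1) * real (m + 2)) = 1 / real (m + 1) - 1 / real (m + 2)"
    by (simp add: divide_simps del: of_nat_add of_nat_Suc)
  finally show ?case
    by simp
qed simp

section \<open>Cluster functionals and the class \<open>\<B>\<close>\<close>

lemma sum_mset_image_eq_sum_count:
  fixes h :: "'a \<Rightarrow> 'b::comm_semiring_1"
  shows "(\<Sum>x\<in>#X. h x) = (\<Sum>x\<in>set_mset X. of_nat (count X x) * h x)"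
proof (induction X)
  case (add x X)
  have "(\<Sum>y\<in>set_mset (add_mset x X). of_nat (count (add_mset x X) y) * h y)
      = (\<Sum>y\<in>insert x (set_mset X). of_nat (count X y) * h y + (if y = x then h x else 0))"
    by (intro sum.cong) (auto simp: algebra_simps)
  also have "\<dots> = (\<Sum>y\<in>insert x (set_mset X). of_nat (count X y) * h y) + h x"
    by (simp add: sum.distrib)
  also have "(\<Sum>y\<in>insert x (set_mset X). of_nat (count X y) * h y)
      = (\<Sum>y\<in>set_mset X. of_nat (count X y) * h y)"
    by (cases "x \<in># X") (auto simp: not_in_iff insert_absorb)
  finally show ?case
    using add by (simp add: add.commute)
qed simp

lemma pairing_eq_sum_count: "pairing X f = (\<Sum>n\<in>set_mset X. real (count X n) * f n)"
  unfolding pairing_def by (rule sum_mset_image_eq_sum_count)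

lemma pairing_empty [simp]: "pairing {#} f = 0"
  and pairing_singleton [simp]: "pairing {#n#} f = f n"
  and pairing_add_mset [simp]: "pairing (add_mset n X) f = f n + pairing X f"
  and pairing_union: "pairing (X + Y) f = pairing X f + pairing Y f"
  by (simp_all add: pairing_def)

lemma pairing_remove1: "n \<in># X \<Longrightarrow> pairing (X - {#n#}) f = pairing X f - f n"
  using pairing_add_mset[of n "X - {#n#}" f] by (simp add: insert_DiffM)

lemma pairing_linear: "pairing X (\<lambda>m. a * f m + b * g m) = a * pairing X f + b * pairing X g"
  unfolding pairing_eq_sum_count by (simp add: sum.distrib sum_distrib_left algebra_simps)

lemma pairing_cmult: "pairing X (\<lambda>m. a * f m) = a * pairing X f"
  using pairing_linear[of X a f 0 f] by simp

lemma pairing_cong: "(\<And>m. m \<in># X \<Longrightarrow> f m = g m) \<Longrightarrow> pairing X f = pairing X g"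
  unfolding pairing_eq_sum_count by (auto intro!: sum.cong)

lemma pairing_mono: "(\<And>m. m \<in># X \<Longrightarrow> f m \<le> g m) \<Longrightarrow> pairing X f \<le> pairing X g"
  unfolding pairing_eq_sum_count by (auto intro!: sum_mono mult_left_mono)

lemma pairing_nonneg: "(\<And>m. m \<in># X \<Longrightarrow> 0 \<le> f m) \<Longrightarrow> 0 \<le> pairing X f"
  using pairing_mono[of X "\<lambda>_. 0" f] by (simp add: pairing_eq_sum_count)

lemma abs_pairing_le: "\<bar>pairing X f\<bar> \<le> pairing X (\<lambda>m. \<bar>f m\<bar>)"
  unfolding pairing_eq_sum_count by (rule order.trans[OF sum_abs]) (simp add: abs_mult)

lemma classB_powr_bound:
  assumes "classB f"
  obtains C r where "r \<ge> 1" "C \<ge> 0" "\<And>n. n \<ge> 1 \<Longrightarrow> \<bar>f n\<bar> \<le> C * real n powr r"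
proof -
  obtain p C where C: "\<And>n. n \<ge> 1 \<Longrightarrow> \<bar>f n\<bar> \<le> C * real n powr p"
    using assms unfolding classB_def by blast
  have C0: "C \<ge> 0"
    using C[of 1] by simp
  have "\<bar>f n\<bar> \<le> C * real n powr max p 1" if "n \<ge> 1" for n
    using C[OF that] mult_left_mono[OF powr_mono[of p "max p 1" "real n"] C0] that by simp
  with C0 show thesis
    by (intro that[of "max p 1" C]) auto
qed

lemma classB_dominated: "classB f \<Longrightarrow> (\<And>m. \<bar>g m\<bar> \<le> \<bar>f m\<bar>) \<Longrightarrow> classB g"
  unfolding classB_def by (meson order.trans)

lemma classB_linear:
  assumes "classB f" "classB g"
  shows "classB (\<lambda>m. a * f m + b * g m)"
proof -
  obtain C1 r1 where r1: "C1 \<ge> 0" "\<And>n. n \<ge> 1 \<Longrightarrow> \<bar>f n\<bar> \<le> C1 * real n powr r1"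
    using classB_powr_bound[OF assms(1)] by metis
  obtain C2 r2 where r2: "r2 \<ge> 1" "C2 \<ge> 0" "\<And>n. n \<ge> 1 \<Longrightarrow> \<bar>g n\<bar> \<le> C2 * real n powr r2"
    using classB_powr_bound[OF assms(2)] by metis
  let ?r = "max r1 r2"
  have "\<bar>a * f n + b * g n\<bar> \<le> (\<bar>a\<bar> * C1 + \<bar>b\<bar> * C2) * real n powr ?r" if n: "n \<ge> 1" for n
  proof -
    have "C1 * real n powr r1 \<le> C1 * real n powr ?r" "C2 * real n powr r2 \<le> C2 * real n powr ?r"
      using n r1(1) r2(2) by (auto intro!: mult_left_mono powr_mono)
    then have "\<bar>f n\<bar> \<le> C1 * real n powr ?r" "\<bar>g n\<bar> \<le> C2 * real n powr ?r"
      using r1(2)[OF n] r2(3)[OF n] by linarith+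
    then have "\<bar>a\<bar> * \<bar>f n\<bar> + \<bar>b\<bar> * \<bar>g n\<bar> \<le> \<bar>a\<bar> * (C1 * real n powr ?r) + \<bar>b\<bar> * (C2 * real n powr ?r)"
      by (intro add_mono mult_left_mono) auto
    moreover have "\<bar>a * f n + b * g n\<bar> \<le> \<bar>a\<bar> * \<bar>f n\<bar> + \<bar>b\<bar> * \<bar>g n\<bar>"
      by (simp add: abs_mult abs_triangle_ineq[THEN order.trans])
    ultimately show ?thesis
      by (simp add: algebra_simps)
  qed
  then show ?thesis
    unfolding classB_def using r2(1) by (intro exI[of _ ?r]) auto
qed

lemma pos_part_nonneg: "0 \<le> pos_part f m"
  and neg_part_nonneg: "0 \<le> neg_part f m"
  and pos_part_minus_neg_part: "pos_part f m - neg_part f m = f m"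
  unfolding pos_part_def neg_part_def by auto

lemma classB_pos_part: "classB f \<Longrightarrow> classB (pos_part f)"
  and classB_neg_part: "classB f \<Longrightarrow> classB (neg_part f)"
  by (erule classB_dominated, simp add: pos_part_def neg_part_def)+

section \<open>The jump kernel of the size process\<close>

locale gfi =
  fixes \<beta> \<theta> \<gamma> :: real
  assumes beta_pos: "\<beta> > 0" and theta_pos: "\<theta> > 0" and gamma_pos: "\<gamma> > 0"
begin

abbreviation jump_rate :: "nat multiset \<Rightarrow> real" where
  "jump_rate \<equiv> gfi_qtot \<beta> \<theta> \<gamma>"

definition split_rate :: "nat \<Rightarrow> nat \<Rightarrow> real" where
  "split_rate n j = \<gamma> * real n / (real j * real (j + 1))"

definition cluster_gen :: "nat multiset \<Rightarrow> (nat multiset \<Rightarrow> real) \<Rightarrow> nat \<Rightarrow> real" where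
  "cluster_gen X \<phi> n = \<theta> * real n * \<phi> (X - {#n#}) + \<beta> * real n * \<phi> (X - {#n#} + {#n + 1#})
     + (\<Sum>j=1..n-1. split_rate n j * \<phi> (X - {#n#} + {#j, n - j#}))"

text \<open>\<open>gen X \<phi>\<close> is the jump kernel \<open>\<Sum>\<^sub>Z rate X Z \<cdot> \<phi> Z\<close> (lemma \<open>sum_gfi_rate_eq_gen\<close>), written cluster
  by cluster; the generator of the chain is \<open>gen X \<phi> - jump_rate X \<cdot> \<phi> X\<close>.\<close>

definition gen :: "nat multiset \<Rightarrow> (nat multiset \<Rightarrow> real) \<Rightarrow> real" where
  "gen X \<phi> = (\<Sum>n\<in>set_mset X. real (count X n) * cluster_gen X \<phi> n)"

definition successors :: "nat multiset \<Rightarrow> nat multiset set" where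
  "successors X = (\<Union>n\<in>set_mset X. {X - {#n#}, X - {#n#} + {#n + 1#}}
     \<union> (\<lambda>j. X - {#n#} + {#j, n - j#}) ` {1..n-1})"

definition positive_sizes :: "nat multiset \<Rightarrow> bool" where
  "positive_sizes X \<longleftrightarrow> 0 \<notin># X"

lemma split_rate_nonneg: "0 \<le> split_rate n j"
  unfolding split_rate_def using gamma_pos by auto

lemma sum_split_rate_le: "(\<Sum>j=1..n-1. split_rate n j) \<le> \<gamma> * real n"
proof -
  have "(\<Sum>j=1..n-1. split_rate n j) = \<gamma> * real n * (\<Sum>j=1..n-1. 1 / (real j * real (j + 1)))"
    unfolding split_rate_def sum_distrib_left by simp
  also have "\<dots> \<le> \<gamma> * real n * 1"
    using gamma_pos by (intro mult_left_mono) (simp_all only: sum_inverse_consecutive, auto)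
  finally show ?thesis
    by simp
qed

lemma jump_rate_eq: "jump_rate X = (\<Sum>n\<in>set_mset X. real (count X n)
    * (\<theta> * real n + \<beta> * real n + (\<Sum>j=1..n-1. split_rate n j)))"
  unfolding gfi_qtot_def split_rate_def ..

lemma jump_rate_nonneg: "0 \<le> jump_rate X"
  unfolding jump_rate_eq using beta_pos theta_pos
  by (intro sum_nonneg mult_nonneg_nonneg add_nonneg_nonneg split_rate_nonneg) auto

lemma finite_successors: "finite (successors X)"
  unfolding successors_def by auto

lemma successorsI:
  assumes "n \<in># X"
  shows "X - {#n#} \<in> successors X" "X - {#n#} + {#n + 1#} \<in> successors X"
    and "j \<in> {1..n-1} \<Longrightarrow> X - {#n#} + {#j, n - j#} \<in> successors X"
  using assms unfolding successors_def by blast+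

lemma positive_sizes_successors: "positive_sizes X \<Longrightarrow> Z \<in> successors X \<Longrightarrow> positive_sizes Z"
  unfolding successors_def positive_sizes_def by (auto dest: in_diffD)

lemma positive_sizes_singleton: "n \<ge> 1 \<Longrightarrow> positive_sizes {#n#}"
  unfolding positive_sizes_def by auto

lemma positive_sizes_member: "positive_sizes X \<Longrightarrow> n \<in># X \<Longrightarrow> n \<ge> 1"
  unfolding positive_sizes_def by (cases n) auto

lemma gfi_rate_nonneg: "0 \<le> gfi_rate \<beta> \<theta> \<gamma> X Z"
  unfolding gfi_rate_def using beta_pos theta_pos gamma_pos
  by (intro sum_nonneg mult_nonneg_nonneg add_nonneg_nonneg) auto

lemma gfi_rate_eq_0: "Z \<notin> successors X \<Longrightarrow> gfi_rate \<beta> \<theta> \<gamma> X Z = 0"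
  unfolding gfi_rate_def
proof (intro sum.neutral ballI)
  fix n assume "n \<in> set_mset X" and "Z \<notin> successors X"
  then have "Z \<noteq> X - {#n#}" "Z \<noteq> X - {#n#} + {#n + 1#}"
    "\<And>j. j \<in> {1..n-1} \<Longrightarrow> Z \<noteq> X - {#n#} + {#j, n - j#}"
    using successorsI by blast+
  then show "real (count X n) * (\<theta> * real n * (if Z = X - {#n#} then 1 else 0) +
         \<beta> * real n * (if Z = X - {#n#} + {#n + 1#} then 1 else 0) +
         (\<Sum>j = 1..n - 1. \<gamma> * real n / (real j * real (j + 1)) *
            (if Z = X - {#n#} + {#j, n - j#} then 1 else 0))) = 0"
    by simp
qed

lemma sum_gfi_rate_eq_gen: "(\<Sum>Z\<in>successors X. gfi_rate \<beta> \<theta> \<gamma> X Z * \<phi> Z) = gen X \<phi>"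
proof -
  let ?S = "successors X"
  define contrib where "contrib n Z =
      \<theta> * real n * (if Z = X - {#n#} then \<phi> Z else 0)
    + \<beta> * real n * (if Z = X - {#n#} + {#n + 1#} then \<phi> Z else 0)
    + (\<Sum>j=1..n-1. split_rate n j * (if Z = X - {#n#} + {#j, n - j#} then \<phi> Z else 0))" for n Z
  have rate: "gfi_rate \<beta> \<theta> \<gamma> X Z * \<phi> Z = (\<Sum>n\<in>set_mset X. real (count X n) * contrib n Z)" for Z
  proof -
    have ite: "(if P then 1 else 0) * v = (if P then v else (0::real))" for P v
      by simp
    have "real c * (a * (if P then 1 else 0) + b * (if Q then 1 else 0)
          + (\<Sum>j\<in>J. d j * (if R j then 1 else 0))) * v
        = real c * (a * (if P then v else 0) + b * (if Q then v else 0)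
          + (\<Sum>j\<in>J. d j * (if R j then v else 0)))"
      for c a b P Q J d R and v :: real
      by (simp add: ring_distribs sum_distrib_right mult.assoc ite)
    then show ?thesis
      unfolding gfi_rate_def contrib_def split_rate_def[symmetric] sum_distrib_right
      by (intro sum.cong refl)
  qed
  have cluster: "(\<Sum>Z\<in>?S. contrib n Z) = cluster_gen X \<phi> n" if "n \<in># X" for n
  proof -
    have "(\<Sum>Z\<in>?S. contrib n Z)
        = \<theta> * real n * (\<Sum>Z\<in>?S. if Z = X - {#n#} then \<phi> Z else 0)
        + \<beta> * real n * (\<Sum>Z\<in>?S. if Z = X - {#n#} + {#n + 1#} then \<phi> Z else 0)
        + (\<Sum>j=1..n-1. split_rate n j * (\<Sum>Z\<in>?S. if Z = X - {#n#} + {#j, n - j#} then \<phi> Z else 0))"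
      unfolding contrib_def sum.distrib sum_distrib_left[symmetric]
      by (simp add: sum_distrib_left sum.swap[of _ "successors X"])
    then show ?thesis
      using successorsI[OF that] unfolding cluster_gen_def
      by (simp add: sum.delta[OF finite_successors])
  qed
  have "(\<Sum>Z\<in>?S. gfi_rate \<beta> \<theta> \<gamma> X Z * \<phi> Z) = (\<Sum>n\<in>set_mset X. real (count X n) * (\<Sum>Z\<in>?S. contrib n Z))"
    unfolding rate sum_distrib_left by (rule sum.swap)
  then show ?thesis
    unfolding gen_def by (simp add: cluster)
qed

lemma gen_linear: "gen X (\<lambda>Z. a * \<phi> Z + b * \<psi> Z) = a * gen X \<phi> + b * gen X \<psi>"
  unfolding gen_def cluster_gen_def by (simp add: sum.distrib sum_distrib_left algebra_simps)

lemma gen_add: "gen X (\<lambda>Z. \<phi> Z + \<psi> Z) = gen X \<phi> + gen X \<psi>"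
  and gen_diff: "gen X (\<lambda>Z. \<phi> Z - \<psi> Z) = gen X \<phi> - gen X \<psi>"
  and gen_cmult: "gen X (\<lambda>Z. a * \<phi> Z) = a * gen X \<phi>"
  using gen_linear[of X 1 \<phi> 1 \<psi>] gen_linear[of X 1 \<phi> "-1" \<psi>] gen_linear[of X a \<phi> 0 \<psi>] by simp_all

lemma gen_zero: "gen X (\<lambda>Z. 0) = 0"
  using gen_cmult[of X 0 "\<lambda>_. 0"] by simp

lemma gen_sum: "finite I \<Longrightarrow> gen X (\<lambda>Z. \<Sum>i\<in>I. \<phi> i Z) = (\<Sum>i\<in>I. gen X (\<phi> i))"
  by (induction I rule: finite_induct) (auto simp: gen_zero gen_add)

lemma gen_const: "gen X (\<lambda>Z. c) = c * jump_rate X"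
  unfolding gen_def cluster_gen_def jump_rate_eq
  by (simp add: sum_distrib_left sum_distrib_right algebra_simps)

lemma gen_cong: "(\<And>Z. Z \<in> successors X \<Longrightarrow> \<phi> Z = \<psi> Z) \<Longrightarrow> gen X \<phi> = gen X \<psi>"
  unfolding sum_gfi_rate_eq_gen[symmetric] by simp

lemma gen_mono: "(\<And>Z. Z \<in> successors X \<Longrightarrow> \<phi> Z \<le> \<psi> Z) \<Longrightarrow> gen X \<phi> \<le> gen X \<psi>"
  unfolding sum_gfi_rate_eq_gen[symmetric] by (auto intro!: sum_mono mult_left_mono gfi_rate_nonneg)

lemma gen_nonneg: "(\<And>Z. Z \<in> successors X \<Longrightarrow> 0 \<le> \<phi> Z) \<Longrightarrow> 0 \<le> gen X \<phi>"
  using gen_mono[of X "\<lambda>_. 0" \<phi>] by (simp add: gen_zero)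

lemma continuous_on_gen:
  "(\<And>Z. Z \<in> successors X \<Longrightarrow> continuous_on S (\<phi> Z)) \<Longrightarrow> continuous_on S (\<lambda>t. gen X (\<lambda>Z. \<phi> Z t))"
  unfolding sum_gfi_rate_eq_gen[symmetric] by (intro continuous_intros) auto

lemma gen_union: "gen (X + Y) \<phi> = gen X (\<lambda>Z. \<phi> (Z + Y)) + gen Y (\<lambda>Z. \<phi> (X + Z))"
proof -
  have left: "cluster_gen (X + Y) \<phi> n = cluster_gen X (\<lambda>Z. \<phi> (Z + Y)) n" if "n \<in># X" for n
  proof -
    have "X + Y - {#n#} = X - {#n#} + Y"
      using that by (metis add.commute diff_union_single_conv)
    then show ?thesis
      unfolding cluster_gen_def by simp
  qed
  have right: "cluster_gen (X + Y) \<phi> n = cluster_gen Y (\<lambda>Z. \<phi> (X + Z)) n" if "n \<in># Y" for n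
  proof -
    have "X + Y - {#n#} = X + (Y - {#n#})"
      using that by (metis diff_union_single_conv)
    then show ?thesis
      unfolding cluster_gen_def by simp
  qed
  have "gen (X + Y) \<phi> = (\<Sum>n\<in>set_mset (X + Y). real (count X n) * cluster_gen (X + Y) \<phi> n)
      + (\<Sum>n\<in>set_mset (X + Y). real (count Y n) * cluster_gen (X + Y) \<phi> n)"
    unfolding gen_def by (simp add: sum.distrib algebra_simps)
  also have "\<dots> = (\<Sum>n\<in>set_mset X. real (count X n) * cluster_gen (X + Y) \<phi> n)
      + (\<Sum>n\<in>set_mset Y. real (count Y n) * cluster_gen (X + Y) \<phi> n)"
    by (intro arg_cong2[where f = "(+)"] sum.mono_neutral_right) (auto simp: not_in_iff)
  also have "\<dots> = gen X (\<lambda>Z. \<phi> (Z + Y)) + gen Y (\<lambda>Z. \<phi> (X + Z))"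
    unfolding gen_def by (simp add: left right)
  finally show ?thesis .
qed

lemma jump_rate_union: "jump_rate (X + Y) = jump_rate X + jump_rate Y"
  using gen_union[of X Y "\<lambda>_. 1"] by (simp add: gen_const)

lemma gen_pairing:
  "gen X (\<lambda>Z. pairing Z f) = jump_rate X * pairing X f + pairing X (gfi_L \<beta> \<theta> \<gamma> f)"
proof -
  have cluster: "cluster_gen X (\<lambda>Z. pairing Z f) n
      = (\<theta> * real n + \<beta> * real n + (\<Sum>j=1..n-1. split_rate n j)) * pairing X f + gfi_L \<beta> \<theta> \<gamma> f n"
    if "n \<in># X" for n
  proof -
    have "(\<Sum>j=1..n-1. split_rate n j * (pairing X f - f n + f j + f (n - j)))
      = (\<Sum>j=1..n-1. split_rate n j) * pairing X f + (\<Sum>j=1..n-1. split_rate n j * (f j + f (n - j) - f n))"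
      unfolding sum_distrib_right sum.distrib[symmetric] by (intro sum.cong refl) (simp add: algebra_simps)
    then show ?thesis
      unfolding cluster_gen_def gfi_L_def split_rate_def[symmetric]
      by (simp add: pairing_remove1[OF that] pairing_union algebra_simps)
  qed
  have "gen X (\<lambda>Z. pairing Z f) = (\<Sum>n\<in>set_mset X. real (count X n) *
      ((\<theta> * real n + \<beta> * real n + (\<Sum>j=1..n-1. split_rate n j)) * pairing X f + gfi_L \<beta> \<theta> \<gamma> f n))"
    unfolding gen_def by (intro sum.cong refl) (simp add: cluster)
  also have "\<dots> = jump_rate X * pairing X f + pairing X (gfi_L \<beta> \<theta> \<gamma> f)"
    unfolding gfi_qtot_def pairing_eq_sum_count split_rate_def
    by (simp add: sum.distrib sum_distrib_left sum_distrib_right algebra_simps)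
  finally show ?thesis .
qed

definition total_size :: "nat multiset \<Rightarrow> real" where
  "total_size X = pairing X real"

lemma total_size_nonneg: "0 \<le> total_size X"
  unfolding total_size_def by (intro pairing_nonneg) auto

lemma member_le_total_size: "n \<in># X \<Longrightarrow> real n \<le> total_size X"
  unfolding total_size_def using pairing_remove1[of n X real] pairing_nonneg[of "X - {#n#}" real]
  by simp

lemma jump_rate_le_total_size: "jump_rate X \<le> (\<theta> + \<beta> + \<gamma>) * total_size X"
proof -
  have "jump_rate X \<le> (\<Sum>n\<in>set_mset X. real (count X n) * ((\<theta> + \<beta> + \<gamma>) * real n))"
    unfolding jump_rate_eq using sum_split_rate_le
    by (intro sum_mono mult_left_mono) (auto simp: algebra_simps)
  also have "\<dots> = (\<theta> + \<beta> + \<gamma>) * total_size X"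
    unfolding total_size_def pairing_eq_sum_count by (simp add: sum_distrib_left algebra_simps)
  finally show ?thesis .
qed

lemma gen_total_size: "gen X total_size \<le> (jump_rate X + \<beta>) * total_size X"
proof -
  have "gfi_L \<beta> \<theta> \<gamma> real m \<le> \<beta> * real m" for m
  proof -
    have "(\<Sum>j=1..m-1. \<gamma> * real m / (real j * real (j + 1)) * (real j + real (m - j) - real m)) = 0"
      by (intro sum.neutral) auto
    then show ?thesis
      unfolding gfi_L_def using theta_pos by simp
  qed
  then have "pairing X (gfi_L \<beta> \<theta> \<gamma> real) \<le> \<beta> * total_size X"
    unfolding total_size_def pairing_cmult[symmetric] by (intro pairing_mono)
  then show ?thesis
    using gen_pairing[of X real] unfolding total_size_def by (simp add: algebra_simps)
qed

section \<open>Expansion of the transition function by number of jumps\<close>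

fun reachable :: "nat \<Rightarrow> nat multiset \<Rightarrow> nat multiset set" where
  "reachable 0 X = {X}"
| "reachable (Suc k) X = (\<Union>Z\<in>successors X. reachable k Z)"

text \<open>\<open>jump_prob k t X Y\<close> is the probability to be in \<open>Y\<close> at time \<open>t\<close> after exactly \<open>k\<close> jumps,
  decomposed at the time \<open>t - u\<close> of the first jump; \<open>jump_expect k t X g\<close> is the corresponding part
  of \<open>E\<^bsub>X\<^esub> g(X\<^sub>t)\<close>.\<close>

fun jump_prob :: "nat \<Rightarrow> real \<Rightarrow> nat multiset \<Rightarrow> nat multiset \<Rightarrow> real" where
  "jump_prob 0 t X Y = (if X = Y then exp (- (jump_rate X * t)) else 0)"
| "jump_prob (Suc k) t X Y =
     integral {0..t} (\<lambda>u. exp (- (jump_rate X * (t - u))) * gen X (\<lambda>Z. jump_prob k u Z Y))"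

definition jump_expect :: "nat \<Rightarrow> real \<Rightarrow> nat multiset \<Rightarrow> (nat multiset \<Rightarrow> real) \<Rightarrow> real" where
  "jump_expect k t X g = (\<Sum>Y\<in>reachable k X. jump_prob k t X Y * g Y)"

lemma finite_reachable: "finite (reachable k X)"
  by (induction k arbitrary: X) (auto simp: finite_successors)

lemma positive_sizes_reachable: "positive_sizes X \<Longrightarrow> Y \<in> reachable k X \<Longrightarrow> positive_sizes Y"
  by (induction k arbitrary: X) (auto dest: positive_sizes_successors)

lemma jump_prob_Suc_eq:
  "jump_prob (Suc k) t X Y
    = exp (- (jump_rate X * t)) * integral {0..t} (\<lambda>u. exp (jump_rate X * u) * gen X (\<lambda>Z. jump_prob k u Z Y))"
proof -
  have "(\<lambda>u. exp (- (jump_rate X * (t - u))) * gen X (\<lambda>Z. jump_prob k u Z Y))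
      = (\<lambda>u. exp (- (jump_rate X * t)) * (exp (jump_rate X * u) * gen X (\<lambda>Z. jump_prob k u Z Y)))"
    by (simp add: algebra_simps fun_eq_iff flip: exp_add)
  then show ?thesis
    by simp
qed

lemma has_real_derivative_jump_prob:
  "t \<ge> 0 \<Longrightarrow> ((\<lambda>t. jump_prob k t X Y) has_real_derivative
     - jump_rate X * jump_prob k t X Y + (if k = 0 then 0 else gen X (\<lambda>Z. jump_prob (k - 1) t Z Y)))
     (at t within {0..})"
proof (induction k arbitrary: t X Y)
  case 0
  show ?case
    by (cases "X = Y") (auto intro!: derivative_eq_intros)
next
  case (Suc k)
  let ?G = "\<lambda>u. gen X (\<lambda>Z. jump_prob k u Z Y)"
  have "continuous_on {0..} ?G"
    using Suc.IH by (intro continuous_on_gen DERIV_continuous_on) auto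
  then have "((\<lambda>s. integral {0..s} (\<lambda>u. exp (jump_rate X * u) * ?G u))
      has_real_derivative exp (jump_rate X * t) * ?G t) (at t within {0..})"
    by (intro has_real_derivative_integral_from_0 continuous_intros Suc.prems)
  then show ?case
    unfolding jump_prob_Suc_eq
    by (auto intro!: derivative_eq_intros simp: algebra_simps simp flip: exp_add)
qed

lemma continuous_on_jump_prob: "continuous_on {0..} (\<lambda>t. jump_prob k t X Y)"
  using has_real_derivative_jump_prob by (intro DERIV_continuous_on) auto

lemma jump_prob_time_0: "jump_prob k 0 X Y = (if k = 0 \<and> X = Y then 1 else 0)"
  by (cases k) auto

lemma jump_prob_nonneg: "t \<ge> 0 \<Longrightarrow> 0 \<le> jump_prob k t X Y"
proof (induction k arbitrary: t X Y)
  case (Suc k)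
  have "continuous_on {0..t} (\<lambda>u. exp (- (jump_rate X * (t - u))) * gen X (\<lambda>Z. jump_prob k u Z Y))"
    by (intro continuous_intros continuous_on_gen continuous_on_subset[OF continuous_on_jump_prob]) auto
  from integrable_continuous_interval[OF this] show ?case
    by (auto intro!: integral_nonneg mult_nonneg_nonneg gen_nonneg Suc.IH)
qed simp

lemma jump_prob_eq_0: "Y \<notin> reachable k X \<Longrightarrow> jump_prob k t X Y = 0"
proof (induction k arbitrary: t X)
  case (Suc k)
  then have "gen X (\<lambda>Z. jump_prob k u Z Y) = gen X (\<lambda>Z. 0)" for u
    by (intro gen_cong) auto
  then show ?case
    by (simp add: gen_zero)
qed simp

lemma jump_expect_eq_sum:
  "finite A \<Longrightarrow> reachable k X \<subseteq> A \<Longrightarrow> jump_expect k t X g = (\<Sum>Y\<in>A. jump_prob k t X Y * g Y)"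
  unfolding jump_expect_def by (rule sum.mono_neutral_left) (auto simp: jump_prob_eq_0)

lemma jump_expect_linear:
  "jump_expect k t X (\<lambda>Y. a * g Y + b * h Y) = a * jump_expect k t X g + b * jump_expect k t X h"
  unfolding jump_expect_def by (simp add: sum.distrib sum_distrib_left algebra_simps)

lemma jump_expect_add: "jump_expect k t X (\<lambda>Y. g Y + h Y) = jump_expect k t X g + jump_expect k t X h"
  and jump_expect_cmult: "jump_expect k t X (\<lambda>Y. a * g Y) = a * jump_expect k t X g"
  using jump_expect_linear[of k t X 1 g 1 h] jump_expect_linear[of k t X a g 0 g] by simp_all

lemma jump_expect_zero: "jump_expect k t X (\<lambda>Y. 0) = 0"
  unfolding jump_expect_def by simp

lemma jump_expect_sum:
  "finite I \<Longrightarrow> jump_expect k t X (\<lambda>Y. \<Sum>i\<in>I. g i Y) = (\<Sum>i\<in>I. jump_expect k t X (g i))"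
  by (induction I rule: finite_induct) (auto simp: jump_expect_zero jump_expect_add)

lemma jump_expect_cong:
  "(\<And>Y. Y \<in> reachable k X \<Longrightarrow> g Y = h Y) \<Longrightarrow> jump_expect k t X g = jump_expect k t X h"
  unfolding jump_expect_def by (auto intro!: sum.cong)

lemma jump_expect_mono:
  "t \<ge> 0 \<Longrightarrow> (\<And>Y. Y \<in> reachable k X \<Longrightarrow> g Y \<le> h Y) \<Longrightarrow> jump_expect k t X g \<le> jump_expect k t X h"
  unfolding jump_expect_def by (auto intro!: sum_mono mult_left_mono jump_prob_nonneg)

lemma jump_expect_nonneg:
  "t \<ge> 0 \<Longrightarrow> (\<And>Y. Y \<in> reachable k X \<Longrightarrow> 0 \<le> g Y) \<Longrightarrow> 0 \<le> jump_expect k t X g"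
  using jump_expect_mono[of t k X "\<lambda>_. 0" g] by (simp add: jump_expect_zero)

lemma abs_jump_expect_le: "t \<ge> 0 \<Longrightarrow> \<bar>jump_expect k t X g\<bar> \<le> jump_expect k t X (\<lambda>Y. \<bar>g Y\<bar>)"
  unfolding jump_expect_def using jump_prob_nonneg
  by (auto intro!: order.trans[OF sum_abs] sum_mono simp: abs_mult)

lemma jump_expect_time_0: "jump_expect k 0 X g = (if k = 0 then g X else 0)"
  unfolding jump_expect_def by (cases k) (auto simp: jump_prob_time_0)

lemma jump_expect_0: "jump_expect 0 t X g = exp (- (jump_rate X * t)) * g X"
  unfolding jump_expect_def by simp

lemma jump_expect_gen_swap:
  "jump_expect k t X (\<lambda>Y. gen Z (\<lambda>W. F Y W)) = gen Z (\<lambda>W. jump_expect k t X (\<lambda>Y. F Y W))"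
  unfolding sum_gfi_rate_eq_gen[symmetric] by (simp add: jump_expect_sum[OF finite_successors] jump_expect_cmult)

lemma gen_jump_prob_sum:
  "(\<Sum>Y\<in>reachable (Suc k) X. gen X (\<lambda>Z. jump_prob k t Z Y) * g Y) = gen X (\<lambda>Z. jump_expect k t Z g)"
proof -
  have "(\<Sum>Y\<in>reachable (Suc k) X. gen X (\<lambda>Z. jump_prob k t Z Y) * g Y)
      = (\<Sum>Y\<in>reachable (Suc k) X. gen X (\<lambda>Z. g Y * jump_prob k t Z Y))"
    by (simp add: gen_cmult mult.commute del: reachable.simps)
  also have "\<dots> = gen X (\<lambda>Z. \<Sum>Y\<in>reachable (Suc k) X. jump_prob k t Z Y * g Y)"
    by (simp add: gen_sum[OF finite_reachable] mult.commute del: reachable.simps)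
  also have "\<dots> = gen X (\<lambda>Z. jump_expect k t Z g)"
    by (intro gen_cong jump_expect_eq_sum[symmetric] finite_reachable) auto
  finally show ?thesis .
qed

lemma has_real_derivative_jump_expect_inner:
  "(\<And>Y. ((\<lambda>t. h t Y) has_real_derivative h' Y) (at x within S))
    \<Longrightarrow> ((\<lambda>t. jump_expect k s X (h t)) has_real_derivative jump_expect k s X h') (at x within S)"
  unfolding jump_expect_def by (intro DERIV_sum DERIV_cmult)

lemma has_real_derivative_jump_expect_param:
  assumes t: "t \<ge> 0" and h: "\<And>Y. ((\<lambda>s. h s Y) has_real_derivative h' Y) (at t within {0..})"
  shows "((\<lambda>s. jump_expect k s X (h s)) has_real_derivative
     - jump_rate X * jump_expect k t X (h t)
     + (if k = 0 then 0 else gen X (\<lambda>Z. jump_expect (k - 1) t Z (h t))) + jump_expect k t X h')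
     (at t within {0..})"
proof -
  let ?G = "\<lambda>Y. if k = 0 then 0 else gen X (\<lambda>Z. jump_prob (k - 1) t Z Y)"
  have "((\<lambda>s. jump_expect k s X (h s)) has_real_derivative
      (\<Sum>Y\<in>reachable k X. (- jump_rate X * jump_prob k t X Y + ?G Y) * h t Y + h' Y * jump_prob k t X Y))
      (at t within {0..})"
    unfolding jump_expect_def by (intro DERIV_sum DERIV_mult has_real_derivative_jump_prob t h)
  also have "(\<Sum>Y\<in>reachable k X. (- jump_rate X * jump_prob k t X Y + ?G Y) * h t Y + h' Y * jump_prob k t X Y)
      = - jump_rate X * jump_expect k t X (h t) + (\<Sum>Y\<in>reachable k X. ?G Y * h t Y) + jump_expect k t X h'"
    unfolding jump_expect_def sum_distrib_left sum.distrib[symmetric]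
    by (intro sum.cong refl) (simp add: algebra_simps)
  also have "(\<Sum>Y\<in>reachable k X. ?G Y * h t Y)
      = (if k = 0 then 0 else gen X (\<lambda>Z. jump_expect (k - 1) t Z (h t)))"
    by (cases k) (simp_all add: gen_jump_prob_sum del: reachable.simps)
  finally show ?thesis .
qed

lemma has_real_derivative_jump_expect:
  "t \<ge> 0 \<Longrightarrow> ((\<lambda>s. jump_expect k s X g) has_real_derivative
     - jump_rate X * jump_expect k t X g + (if k = 0 then 0 else gen X (\<lambda>Z. jump_expect (k - 1) t Z g)))
     (at t within {0..})"
  using has_real_derivative_jump_expect_param[of t "\<lambda>s. g" "\<lambda>_. 0" k X]
  by (simp add: jump_expect_zero)

lemma nn_integral_gfi_rate:
  assumes "\<And>Z. 0 \<le> \<phi> Z"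
  shows "(\<integral>\<^sup>+ Z. ennreal (gfi_rate \<beta> \<theta> \<gamma> X Z) * ennreal (\<phi> Z) \<partial>count_space UNIV) = ennreal (gen X \<phi>)"
proof -
  have "(\<integral>\<^sup>+ Z. ennreal (gfi_rate \<beta> \<theta> \<gamma> X Z) * ennreal (\<phi> Z) \<partial>count_space UNIV)
      = (\<Sum>Z\<in>successors X. ennreal (gfi_rate \<beta> \<theta> \<gamma> X Z * \<phi> Z))"
    using assms gfi_rate_nonneg
    by (subst nn_integral_count_space') (auto simp: finite_successors gfi_rate_eq_0 ennreal_mult)
  also have "\<dots> = ennreal (gen X \<phi>)"
    using assms gfi_rate_nonneg by (subst sum_ennreal) (auto simp: sum_gfi_rate_eq_gen)
  finally show ?thesis .
qed

lemma has_integral_first_jump: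
  "((\<lambda>s. exp (- (jump_rate X * s)) * gen X (\<lambda>Z. jump_prob k (t - s) Z Y))
    has_integral jump_prob (Suc k) t X Y) {0..t}"
proof -
  let ?h = "\<lambda>u. exp (- (jump_rate X * (t - u))) * gen X (\<lambda>Z. jump_prob k u Z Y)"
  let ?g = "\<lambda>s. exp (- (jump_rate X * s)) * gen X (\<lambda>Z. jump_prob k (t - s) Z Y)"
  have "continuous_on {0..t} ?g"
    by (intro continuous_intros continuous_on_gen continuous_on_compose2[OF continuous_on_jump_prob]) auto
  then have "(?g has_integral integral {0..t} ?g) {0..t}"
    by (intro integrable_integral integrable_continuous_interval)
  moreover have "integral {0..t} ?g = jump_prob (Suc k) t X Y"
  proof -
    have "integral {0..t} ?g = integral {0..t} (\<lambda>s. ?h (t - s))"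
      by simp
    also have "\<dots> = integral {0..t} ?h"
      by (rule integral_reflect_atLeastAtMost_0)
    also have "\<dots> = jump_prob (Suc k) t X Y"
      by simp
    finally show ?thesis .
  qed
  ultimately show ?thesis
    by simp
qed

lemma gfi_trans_approx_eq:
  "t \<ge> 0 \<Longrightarrow> gfi_trans_approx \<beta> \<theta> \<gamma> k t X Y = ennreal (\<Sum>j<k. jump_prob j t X Y)"
proof (induction k arbitrary: t X Y)
  case (Suc k)
  define F where "F s = exp (- (jump_rate X * s)) * gen X (\<lambda>Z. \<Sum>j<k. jump_prob j (t - s) Z Y)" for s
  have F_integral: "(F has_integral (\<Sum>j<k. jump_prob (Suc j) t X Y)) {0..t}"
    unfolding F_def gen_sum[OF finite_lessThan] sum_distrib_left
    by (intro has_integral_sum finite_lessThan has_integral_first_jump)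
  have F_nonneg: "0 \<le> F s" if "s \<in> {0..t}" for s
    using that unfolding F_def by (auto intro!: mult_nonneg_nonneg gen_nonneg sum_nonneg jump_prob_nonneg)
  have first_jump: "ennreal (exp (- jump_rate X * s)) *
      (\<integral>\<^sup>+ Z. ennreal (gfi_rate \<beta> \<theta> \<gamma> X Z) * gfi_trans_approx \<beta> \<theta> \<gamma> k (t - s) Z Y \<partial>count_space UNIV)
      = ennreal (F s)" if "s \<in> {0..t}" for s
  proof -
    let ?S = "\<lambda>Z. \<Sum>j<k. jump_prob j (t - s) Z Y"
    have S_nonneg: "0 \<le> ?S Z" for Z
      using that by (auto intro!: sum_nonneg jump_prob_nonneg)
    have "(\<integral>\<^sup>+ Z. ennreal (gfi_rate \<beta> \<theta> \<gamma> X Z) * gfi_trans_approx \<beta> \<theta> \<gamma> k (t - s) Z Y \<partial>count_space UNIV)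
        = (\<integral>\<^sup>+ Z. ennreal (gfi_rate \<beta> \<theta> \<gamma> X Z) * ennreal (?S Z) \<partial>count_space UNIV)"
      using that Suc.IH[of "t - s"] by simp
    also have "\<dots> = ennreal (gen X ?S)"
      using S_nonneg by (rule nn_integral_gfi_rate)
    finally show ?thesis
      unfolding F_def using S_nonneg by (simp add: ennreal_mult gen_nonneg)
  qed
  have "(\<integral>\<^sup>+ s\<in>{0..t}. ennreal (exp (- jump_rate X * s)) *
      (\<integral>\<^sup>+ Z. ennreal (gfi_rate \<beta> \<theta> \<gamma> X Z) * gfi_trans_approx \<beta> \<theta> \<gamma> k (t - s) Z Y \<partial>count_space UNIV) \<partial>lborel)
      = (\<integral>\<^sup>+ s\<in>{0..t}. ennreal (F s) \<partial>lborel)"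
    by (rule set_nn_integral_cong) (rule refl, rule refl, rule first_jump, auto)
  also have "\<dots> = ennreal (\<Sum>j<k. jump_prob (Suc j) t X Y)"
    using F_nonneg F_integral by (rule nn_integral_has_integral_lebesgue')
  finally have "gfi_trans_approx \<beta> \<theta> \<gamma> (Suc k) t X Y
      = ennreal (jump_prob 0 t X Y) + ennreal (\<Sum>j<k. jump_prob (Suc j) t X Y)"
    unfolding gfi_trans_approx.simps by simp
  also have "\<dots> = ennreal (jump_prob 0 t X Y + (\<Sum>j<k. jump_prob (Suc j) t X Y))"
    using Suc.prems by (intro ennreal_plus[symmetric] sum_nonneg jump_prob_nonneg) auto
  also have "jump_prob 0 t X Y + (\<Sum>j<k. jump_prob (Suc j) t X Y) = (\<Sum>j<Suc k. jump_prob j t X Y)"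
    by (simp only: sum.lessThan_Suc_shift)
  finally show ?case .
qed simp

lemma gfi_trans_eq_suminf: "t \<ge> 0 \<Longrightarrow> gfi_trans \<beta> \<theta> \<gamma> t X Y = (\<Sum>j. ennreal (jump_prob j t X Y))"
  unfolding gfi_trans_def suminf_eq_SUP gfi_trans_approx_eq
  by (simp add: sum_ennreal jump_prob_nonneg)

lemma gfi_Mplus_eq_suminf:
  assumes f: "\<And>m. 0 \<le> f m" and t: "t \<ge> 0"
  shows "gfi_Mplus \<beta> \<theta> \<gamma> f t n = (\<Sum>j. ennreal (jump_expect j t {#n#} (\<lambda>Y. pairing Y f)))"
proof -
  have f_pairing_nonneg: "0 \<le> pairing Y f" for Y
    using f by (intro pairing_nonneg)
  have "gfi_Mplus \<beta> \<theta> \<gamma> f t n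
      = (\<integral>\<^sup>+ Y. (\<Sum>j. ennreal (jump_prob j t {#n#} Y * pairing Y f)) \<partial>count_space UNIV)"
    unfolding gfi_Mplus_def gfi_trans_eq_suminf[OF t] ennreal_suminf_multc[symmetric]
    using t f_pairing_nonneg by (simp add: ennreal_mult' jump_prob_nonneg)
  also have "\<dots> = (\<Sum>j. \<integral>\<^sup>+ Y. ennreal (jump_prob j t {#n#} Y * pairing Y f) \<partial>count_space UNIV)"
    by (rule nn_integral_suminf) simp
  also have "\<dots> = (\<Sum>j. ennreal (jump_expect j t {#n#} (\<lambda>Y. pairing Y f)))"
  proof (intro suminf_cong)
    fix j
    have "(\<integral>\<^sup>+ Y. ennreal (jump_prob j t {#n#} Y * pairing Y f) \<partial>count_space UNIV)
        = (\<Sum>Y\<in>reachable j {#n#}. ennreal (jump_prob j t {#n#} Y * pairing Y f))"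
      by (rule nn_integral_count_space') (auto simp: finite_reachable jump_prob_eq_0)
    also have "\<dots> = ennreal (jump_expect j t {#n#} (\<lambda>Y. pairing Y f))"
      unfolding jump_expect_def using t f_pairing_nonneg
      by (intro sum_ennreal mult_nonneg_nonneg jump_prob_nonneg)
    finally show "(\<integral>\<^sup>+ Y. ennreal (jump_prob j t {#n#} Y * pairing Y f) \<partial>count_space UNIV)
        = ennreal (jump_expect j t {#n#} (\<lambda>Y. pairing Y f))" .
  qed
  finally show ?thesis .
qed

lemma jump_expect_add_time:
  assumes t: "t \<ge> 0"
  shows "s \<ge> 0 \<Longrightarrow> jump_expect k (s + t) X g = (\<Sum>i\<le>k. jump_expect i s X (\<lambda>Z. jump_expect (k - i) t Z g))"
proof (induction k arbitrary: X s)
  case 0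
  show ?case
    by (simp add: jump_expect_0 distrib_left exp_add[symmetric])
next
  case (Suc k)
  define G where "G s = gen X (\<lambda>Z. jump_expect k (s + t) Z g)" for s
  have lhs: "((\<lambda>s. jump_expect (Suc k) (s + t) X g) has_real_derivative
      - jump_rate X * jump_expect (Suc k) (s + t) X g + G s) (at s within {0..})" if "s \<ge> 0" for s
  proof (rule has_real_derivative_shift_within_nonneg[OF _ t])
    show "((\<lambda>s. jump_expect (Suc k) s X g) has_real_derivative
        - jump_rate X * jump_expect (Suc k) (s + t) X g + G s) (at (s + t) within {0..})"
      unfolding G_def using has_real_derivative_jump_expect[of "s + t" "Suc k" X g] that t by simp
  qed
  have rhs: "((\<lambda>s. \<Sum>i\<le>Suc k. jump_expect i s X (\<lambda>Z. jump_expect (Suc k - i) t Z g)) has_real_derivative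
      - jump_rate X * (\<Sum>i\<le>Suc k. jump_expect i s X (\<lambda>Z. jump_expect (Suc k - i) t Z g)) + G s)
      (at s within {0..})" if s: "s \<ge> 0" for s
  proof -
    have "(\<Sum>i\<le>Suc k. if i = 0 then 0
          else gen X (\<lambda>Z. jump_expect (i - 1) s Z (\<lambda>Z. jump_expect (Suc k - i) t Z g)))
        = gen X (\<lambda>Z. \<Sum>i\<le>k. jump_expect i s Z (\<lambda>W. jump_expect (k - i) t W g))"
      by (simp add: sum.atMost_Suc_shift gen_sum del: sum.atMost_Suc)
    also have "\<dots> = G s"
      unfolding G_def using Suc.IH[OF s] by simp
    finally have G_eq: "(\<Sum>i\<le>Suc k. if i = 0 then 0
        else gen X (\<lambda>Z. jump_expect (i - 1) s Z (\<lambda>Z. jump_expect (Suc k - i) t Z g))) = G s" .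
    have "((\<lambda>s. \<Sum>i\<le>Suc k. jump_expect i s X (\<lambda>Z. jump_expect (Suc k - i) t Z g)) has_real_derivative
        (\<Sum>i\<le>Suc k. - jump_rate X * jump_expect i s X (\<lambda>Z. jump_expect (Suc k - i) t Z g)
          + (if i = 0 then 0 else gen X (\<lambda>Z. jump_expect (i - 1) s Z (\<lambda>Z. jump_expect (Suc k - i) t Z g)))))
        (at s within {0..})"
      by (intro DERIV_sum has_real_derivative_jump_expect s)
    then show ?thesis
      unfolding sum.distrib G_eq sum_distrib_left by simp
  qed
  have "(\<Sum>i\<le>Suc k. jump_expect i 0 X (\<lambda>Z. jump_expect (Suc k - i) t Z g)) = jump_expect (Suc k) t X g"
    by (subst sum.atMost_Suc_shift) (simp add: jump_expect_time_0)
  then show ?case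
    using linear_ode_unique[OF lhs rhs _ Suc.prems] by simp
qed

lemma sum_jump_expect_gen_shift:
  "(\<Sum>i\<le>Suc k. jump_expect i t U (\<lambda>Y1. if Suc k - i = 0 then 0
      else gen V (\<lambda>W. jump_expect (Suc k - i - 1) t W (\<lambda>Y2. g (Y1 + Y2)))))
    = gen V (\<lambda>W. \<Sum>i\<le>k. jump_expect i t U (\<lambda>Y1. jump_expect (k - i) t W (\<lambda>Y2. g (Y1 + Y2))))"
proof -
  have "(\<Sum>i\<le>Suc k. jump_expect i t U (\<lambda>Y1. if Suc k - i = 0 then 0
      else gen V (\<lambda>W. jump_expect (Suc k - i - 1) t W (\<lambda>Y2. g (Y1 + Y2)))))
      = (\<Sum>i\<le>k. jump_expect i t U (\<lambda>Y1. gen V (\<lambda>W. jump_expect (k - i) t W (\<lambda>Y2. g (Y1 + Y2)))))"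
    by (intro trans[OF sum.atMost_Suc] sum.cong) (auto simp: jump_expect_zero Suc_diff_le)
  then show ?thesis
    by (simp add: jump_expect_gen_swap gen_sum)
qed

lemma has_real_derivative_jump_expect_convolution:
  assumes t: "t \<ge> 0"
  shows "((\<lambda>t. \<Sum>i\<le>Suc k. jump_expect i t U (\<lambda>Y1. jump_expect (Suc k - i) t V (\<lambda>Y2. g (Y1 + Y2))))
    has_real_derivative
      - jump_rate (U + V)
        * (\<Sum>i\<le>Suc k. jump_expect i t U (\<lambda>Y1. jump_expect (Suc k - i) t V (\<lambda>Y2. g (Y1 + Y2))))
      + gen U (\<lambda>W. \<Sum>i\<le>k. jump_expect i t W (\<lambda>Y1. jump_expect (k - i) t V (\<lambda>Y2. g (Y1 + Y2))))
      + gen V (\<lambda>W. \<Sum>i\<le>k. jump_expect i t U (\<lambda>Y1. jump_expect (k - i) t W (\<lambda>Y2. g (Y1 + Y2)))))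
    (at t within {0..})"
proof -
  define H where "H i s Y1 = jump_expect (Suc k - i) s V (\<lambda>Y2. g (Y1 + Y2))" for i s Y1
  define R where "R i Y1 = (if Suc k - i = 0 then 0
    else gen V (\<lambda>W. jump_expect (Suc k - i - 1) t W (\<lambda>Y2. g (Y1 + Y2))))" for i Y1
  have "((\<lambda>s. H i s Y1) has_real_derivative - jump_rate V * H i t Y1 + R i Y1) (at t within {0..})" for i Y1
    unfolding H_def R_def by (rule has_real_derivative_jump_expect[OF t])
  then have deriv: "((\<lambda>t. \<Sum>i\<le>Suc k. jump_expect i t U (H i t)) has_real_derivative
      (\<Sum>i\<le>Suc k. - jump_rate U * jump_expect i t U (H i t)
        + (if i = 0 then 0 else gen U (\<lambda>W. jump_expect (i - 1) t W (H i t)))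
        + jump_expect i t U (\<lambda>Y1. - jump_rate V * H i t Y1 + R i Y1))) (at t within {0..})"
    by (intro DERIV_sum has_real_derivative_jump_expect_param t)
  have left: "(\<Sum>i\<le>Suc k. if i = 0 then 0 else gen U (\<lambda>W. jump_expect (i - 1) t W (H i t)))
      = gen U (\<lambda>W. \<Sum>i\<le>k. jump_expect i t W (\<lambda>Y1. jump_expect (k - i) t V (\<lambda>Y2. g (Y1 + Y2))))"
    unfolding H_def by (simp add: sum.atMost_Suc_shift gen_sum del: sum.atMost_Suc)
  have right: "(\<Sum>i\<le>Suc k. jump_expect i t U (R i))
      = gen V (\<lambda>W. \<Sum>i\<le>k. jump_expect i t U (\<lambda>Y1. jump_expect (k - i) t W (\<lambda>Y2. g (Y1 + Y2))))"
    unfolding R_def by (rule sum_jump_expect_gen_shift)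
  have "jump_expect i t U (\<lambda>Y1. - jump_rate V * H i t Y1 + R i Y1)
      = - jump_rate V * jump_expect i t U (H i t) + jump_expect i t U (R i)" for i
    using jump_expect_linear[of i t U "- jump_rate V" "H i t" 1 "R i"] by simp
  then have "(\<Sum>i\<le>Suc k. - jump_rate U * jump_expect i t U (H i t)
        + (if i = 0 then 0 else gen U (\<lambda>W. jump_expect (i - 1) t W (H i t)))
        + jump_expect i t U (\<lambda>Y1. - jump_rate V * H i t Y1 + R i Y1))
      = - jump_rate (U + V) * (\<Sum>i\<le>Suc k. jump_expect i t U (H i t))
        + (\<Sum>i\<le>Suc k. if i = 0 then 0 else gen U (\<lambda>W. jump_expect (i - 1) t W (H i t)))
        + (\<Sum>i\<le>Suc k. jump_expect i t U (R i))"
    unfolding jump_rate_union sum_distrib_left sum.distrib[symmetric]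
    by (intro sum.cong refl) (simp add: algebra_simps)
  with deriv show ?thesis
    unfolding left right H_def by simp
qed

lemma jump_expect_union:
  "t \<ge> 0 \<Longrightarrow> jump_expect k t (U + V) g
    = (\<Sum>i\<le>k. jump_expect i t U (\<lambda>Y1. jump_expect (k - i) t V (\<lambda>Y2. g (Y1 + Y2))))"
proof (induction k arbitrary: U V t)
  case 0
  show ?case
    by (simp add: jump_expect_0 jump_rate_union distrib_right exp_add[symmetric])
next
  case (Suc k)
  define G where "G t = gen (U + V) (\<lambda>W. jump_expect k t W g)" for t
  have lhs: "((\<lambda>t. jump_expect (Suc k) t (U + V) g) has_real_derivative
      - jump_rate (U + V) * jump_expect (Suc k) t (U + V) g + G t) (at t within {0..})" if "t \<ge> 0" for t
    unfolding G_def using has_real_derivative_jump_expect[OF that, where k = "Suc k" and X = "U + V" and g = g] by simp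
  have rhs: "((\<lambda>t. \<Sum>i\<le>Suc k. jump_expect i t U (\<lambda>Y1. jump_expect (Suc k - i) t V (\<lambda>Y2. g (Y1 + Y2))))
      has_real_derivative - jump_rate (U + V)
        * (\<Sum>i\<le>Suc k. jump_expect i t U (\<lambda>Y1. jump_expect (Suc k - i) t V (\<lambda>Y2. g (Y1 + Y2)))) + G t)
      (at t within {0..})" if "t \<ge> 0" for t
  proof -
    have G_eq: "G t = gen U (\<lambda>W. \<Sum>i\<le>k. jump_expect i t W (\<lambda>Y1. jump_expect (k - i) t V (\<lambda>Y2. g (Y1 + Y2))))
        + gen V (\<lambda>W. \<Sum>i\<le>k. jump_expect i t U (\<lambda>Y1. jump_expect (k - i) t W (\<lambda>Y2. g (Y1 + Y2))))"
      unfolding G_def gen_union using Suc.IH[OF that] by simp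
    show ?thesis
      by (rule DERIV_cong[OF has_real_derivative_jump_expect_convolution[OF that, where k = k and U = U and V = V and g = g]])
         (simp add: G_eq)
  qed
  have "(\<Sum>i\<le>Suc k. jump_expect i 0 U (\<lambda>Y1. jump_expect (Suc k - i) 0 V (\<lambda>Y2. g (Y1 + Y2))))
      = jump_expect (Suc k) 0 (U + V) g"
    by (subst sum.atMost_Suc_shift) (simp add: jump_expect_time_0)
  then show ?case
    using linear_ode_unique[OF lhs rhs _ Suc.prems] by simp
qed

lemma has_real_derivative_jump_expect_at_0:
  "((\<lambda>t. jump_expect j t Z g) has_real_derivative
     (if j = 0 then - jump_rate Z * g Z else if j = 1 then gen Z g else 0)) (at 0 within {0..})"
proof -
  have "(if j = 0 then 0 else gen Z (\<lambda>W. jump_expect (j - 1) 0 W g)) = (if j = 1 then gen Z g else 0)"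
    by (auto simp: jump_expect_time_0 gen_zero)
  then show ?thesis
    using has_real_derivative_jump_expect[of 0 j Z g] by (auto simp: jump_expect_time_0)
qed

lemma has_real_derivative_jump_expect_forward:
  assumes s: "s \<ge> 0"
  shows "((\<lambda>s. jump_expect k s X g) has_real_derivative
     jump_expect k s X (\<lambda>Y. - jump_rate Y * g Y)
     + (if k = 0 then 0 else jump_expect (k - 1) s X (\<lambda>Y. gen Y g))) (at s within {0..})"
proof -
  define D where "D = - jump_rate X * jump_expect k s X g
    + (if k = 0 then 0 else gen X (\<lambda>Z. jump_expect (k - 1) s Z g))"
  define d :: "nat \<Rightarrow> nat multiset \<Rightarrow> real"
    where "d j = (\<lambda>Z. if j = 0 then - jump_rate Z * g Z else if j = 1 then gen Z g else 0)" for j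
  have backward: "((\<lambda>s. jump_expect k s X g) has_real_derivative D) (at s within {0..})"
    unfolding D_def by (rule has_real_derivative_jump_expect[OF s])
  have "((\<lambda>t. jump_expect k (t + s) X g) has_real_derivative D) (at 0 within {0..})"
    using backward s by (intro has_real_derivative_shift_within_nonneg) auto
  then have "((\<lambda>t. \<Sum>i\<le>k. jump_expect i s X (\<lambda>Z. jump_expect (k - i) t Z g)) has_real_derivative D)
      (at 0 within {0..})"
    by (rule has_field_derivative_transform_within[OF _ zero_less_one])
       (use s jump_expect_add_time[of _ s k X g] in \<open>auto simp: add.commute\<close>)
  moreover have "((\<lambda>t. \<Sum>i\<le>k. jump_expect i s X (\<lambda>Z. jump_expect (k - i) t Z g)) has_real_derivative
      (\<Sum>i\<le>k. jump_expect i s X (d (k - i)))) (at 0 within {0..})"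
    unfolding d_def by (intro DERIV_sum has_real_derivative_jump_expect_inner has_real_derivative_jump_expect_at_0)
  moreover have "{0::real..} - {0} = {0<..}"
    by auto
  then have "at (0::real) within {0..} \<noteq> bot"
    by (simp add: at_within_eq_bot_iff)
  ultimately have "D = (\<Sum>i\<le>k. jump_expect i s X (d (k - i)))"
    by (rule has_field_derivative_unique)
  also have "\<dots> = jump_expect k s X (\<lambda>Y. - jump_rate Y * g Y)
      + (if k = 0 then 0 else jump_expect (k - 1) s X (\<lambda>Y. gen Y g))"
  proof (cases k)
    case (Suc k')
    have "(\<Sum>i\<le>k'. jump_expect i s X (d (Suc k' - i))) = (\<Sum>i\<le>k'. if i = k' then jump_expect k' s X (\<lambda>Y. gen Y g) else 0)"
      by (intro sum.cong refl) (auto simp: d_def jump_expect_zero Suc_diff_le)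
    then show ?thesis
      using Suc by (simp add: d_def)
  qed (simp add: d_def)
  finally show ?thesis
    using backward by simp
qed

section \<open>Lyapunov bounds and non-explosion\<close>

lemma has_real_derivative_sum_jump_expect:
  assumes t: "t \<ge> 0"
  shows "((\<lambda>t. \<Sum>k<Suc K. jump_expect k t X g) has_real_derivative
     - jump_rate X * (\<Sum>k<Suc K. jump_expect k t X g) + gen X (\<lambda>Z. \<Sum>k<K. jump_expect k t Z g))
     (at t within {0..})"
proof -
  have "(\<Sum>k<Suc K. if k = 0 then 0 else gen X (\<lambda>Z. jump_expect (k - 1) t Z g))
      = gen X (\<lambda>Z. \<Sum>k<K. jump_expect k t Z g)"
    by (simp add: sum.lessThan_Suc_shift gen_sum del: sum.lessThan_Suc)
  moreover have "((\<lambda>t. \<Sum>k<Suc K. jump_expect k t X g) has_real_derivative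
      (\<Sum>k<Suc K. - jump_rate X * jump_expect k t X g
        + (if k = 0 then 0 else gen X (\<lambda>Z. jump_expect (k - 1) t Z g)))) (at t within {0..})"
    by (intro DERIV_sum has_real_derivative_jump_expect t)
  ultimately show ?thesis
    by (simp only: sum.distrib sum_distrib_left)
qed

lemma sum_jump_expect_time_0: "(\<Sum>k<Suc K. jump_expect k 0 X g) = g X"
  by (subst sum.lessThan_Suc_shift) (simp add: jump_expect_time_0)

text \<open>Each partial sum of the jump expansion of \<open>V\<close> is a subsolution of the linear ODE solved by
  \<open>exp (c t) \<cdot> V X\<close>.\<close>

lemma lyapunov_bound:
  assumes V_nonneg: "\<And>Y. positive_sizes Y \<Longrightarrow> 0 \<le> V Y"
    and V_gen: "\<And>Y. positive_sizes Y \<Longrightarrow> gen Y V \<le> (jump_rate Y + c) * V Y"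
  shows "positive_sizes X \<Longrightarrow> t \<ge> 0 \<Longrightarrow> (\<Sum>k<K. jump_expect k t X V) \<le> exp (c * t) * V X"
proof (induction K arbitrary: X t)
  case 0
  then show ?case
    using V_nonneg by simp
next
  case (Suc K)
  have bound: "gen X (\<lambda>Z. \<Sum>k<K. jump_expect k t Z V) \<le> (jump_rate X + c) * exp (c * t) * V X"
    if "t \<ge> 0" for t
  proof -
    have "gen X (\<lambda>Z. \<Sum>k<K. jump_expect k t Z V) \<le> gen X (\<lambda>Z. exp (c * t) * V Z)"
      using Suc.IH Suc.prems(1) that by (intro gen_mono) (blast dest: positive_sizes_successors)
    also have "\<dots> \<le> exp (c * t) * ((jump_rate X + c) * V X)"
      using V_gen[OF Suc.prems(1)] by (simp add: gen_cmult)
    finally show ?thesis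
      by (simp add: algebra_simps)
  qed
  have exp_deriv: "((\<lambda>t. exp (c * t) * V X) has_real_derivative
      - jump_rate X * (exp (c * t) * V X) + (jump_rate X + c) * exp (c * t) * V X) (at t within {0..})"
    if "t \<ge> 0" for t
    by (auto intro!: derivative_eq_intros simp: algebra_simps)
  have init: "(\<Sum>k<Suc K. jump_expect k 0 X V) \<le> exp (c * 0) * V X"
    using sum_jump_expect_time_0[where K = K and X = X and g = V] by simp
  show ?case
    using linear_ode_comparison[of "\<lambda>t. \<Sum>k<Suc K. jump_expect k t X V" "- jump_rate X"
        "\<lambda>t. gen X (\<lambda>Z. \<Sum>k<K. jump_expect k t Z V)" "\<lambda>t. exp (c * t) * V X"
        "\<lambda>t. (jump_rate X + c) * exp (c * t) * V X" t]
      has_real_derivative_sum_jump_expect exp_deriv bound init Suc.prems(2)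
    by blast
qed

definition size_moment :: "real \<Rightarrow> nat multiset \<Rightarrow> real" where
  "size_moment r X = pairing X (\<lambda>m. real m powr r)"

lemma gfi_L_powr_le:
  assumes r: "r \<ge> 1"
  shows "gfi_L \<beta> \<theta> \<gamma> (\<lambda>m. real m powr r) n \<le> (2 powr (r - 1) * r * \<beta> - \<theta>) * real n powr r"
proof (cases "n = 0")
  case False
  then have n: "real n \<ge> 1"
    by simp
  have split: "(\<Sum>j=1..n-1. \<gamma> * real n / (real j * real (j + 1)) *
      (real j powr r + real (n - j) powr r - real n powr r)) \<le> 0"
  proof (intro sum_nonpos mult_nonneg_nonpos)
    fix j assume "j \<in> {1..n-1}"
    then show "real j powr r + real (n - j) powr r - real n powr r \<le> 0"
      using powr_superadditive[of "real j" "real (n - j)" r] r by auto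
  qed (use gamma_pos in auto)
  have "real n * (real (n + 1) powr r - real n powr r) \<le> real n * (r * 2 powr (r - 1) * real n powr (r - 1))"
    using powr_Suc_diff_le[OF n r] n by (intro mult_left_mono) (auto simp: add.commute)
  also have "\<dots> = 2 powr (r - 1) * r * real n powr r"
    using powr_mult_base[of "real n" "r - 1"] by simp
  finally have grow: "\<beta> * real n * (real (n + 1) powr r - real n powr r) \<le> 2 powr (r - 1) * r * \<beta> * real n powr r"
    using beta_pos by (simp add: mult_left_mono mult.assoc mult.left_commute)
  have die: "\<theta> * real n powr r \<le> \<theta> * real n * real n powr r"
    using n theta_pos by (simp add: mult_le_cancel_right1 mult_left_mono mult.assoc)
  show ?thesis
    using split grow die unfolding gfi_L_def by (simp add: left_diff_distrib)
qed (simp add: gfi_L_def)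

lemma size_moment_nonneg: "0 \<le> size_moment r X"
  unfolding size_moment_def by (intro pairing_nonneg) auto

lemma gen_size_moment_le:
  assumes "r \<ge> 1"
  shows "gen Y (size_moment r) \<le> (jump_rate Y + (2 powr (r - 1) * r * \<beta> - \<theta>)) * size_moment r Y"
proof -
  have "pairing Y (gfi_L \<beta> \<theta> \<gamma> (\<lambda>m. real m powr r))
      \<le> pairing Y (\<lambda>m. (2 powr (r - 1) * r * \<beta> - \<theta>) * real m powr r)"
    by (intro pairing_mono gfi_L_powr_le assms)
  then show ?thesis
    using gen_pairing[of Y "\<lambda>m. real m powr r"]
    unfolding size_moment_def pairing_cmult by (simp add: algebra_simps)
qed

lemma sum_jump_expect_size_moment_le:
  "r \<ge> 1 \<Longrightarrow> t \<ge> 0 \<Longrightarrow> positive_sizes X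
    \<Longrightarrow> (\<Sum>k<K. jump_expect k t X (size_moment r)) \<le> exp ((2 powr (r - 1) * r * \<beta> - \<theta>) * t) * size_moment r X"
  using lyapunov_bound[of "size_moment r" "2 powr (r - 1) * r * \<beta> - \<theta>"] size_moment_nonneg gen_size_moment_le
  by blast

lemma cluster_gen_total_size:
  assumes n: "n \<in># Y"
  shows "cluster_gen Y (\<lambda>Z. \<phi> (total_size Z)) n = \<theta> * real n * \<phi> (total_size Y - real n)
    + \<beta> * real n * \<phi> (total_size Y + 1) + (\<Sum>j=1..n-1. split_rate n j) * \<phi> (total_size Y)"
proof -
  have remove: "total_size (Y - {#n#}) = total_size Y - real n"
    unfolding total_size_def by (rule pairing_remove1[OF n])
  have "total_size (Y - {#n#} + {#j, n - j#}) = total_size Y" if "j \<in> {1..n-1}" for j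
  proof -
    have "j \<le> n"
      using that by auto
    then show ?thesis
      using remove by (simp add: total_size_def of_nat_diff)
  qed
  then have "(\<Sum>j=1..n-1. split_rate n j * \<phi> (total_size (Y - {#n#} + {#j, n - j#})))
      = (\<Sum>j=1..n-1. split_rate n j) * \<phi> (total_size Y)"
    unfolding sum_distrib_right by (intro sum.cong refl) simp
  moreover have "total_size (Y - {#n#} + {#n + 1#}) = total_size Y + 1"
    using remove by (simp add: total_size_def)
  ultimately show ?thesis
    unfolding cluster_gen_def remove by simp
qed

lemma cluster_gen_total_size_powr_le:
  assumes r: "r \<ge> 1" and Y: "positive_sizes Y" and n: "n \<in># Y"
  shows "cluster_gen Y (\<lambda>Z. total_size Z powr r) n
    \<le> (\<theta> * real n + \<beta> * real n + (\<Sum>j=1..n-1. split_rate n j)) * total_size Y powr r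
      + \<beta> * r * 2 powr (r - 1) * (real n * total_size Y powr (r - 1))"
proof -
  let ?V = "total_size Y"
  have n_le: "1 \<le> real n" "real n \<le> ?V"
    using positive_sizes_member[OF Y n] member_le_total_size[OF n] by auto
  have "(?V - real n) powr r \<le> ?V powr r"
    using n_le r by (intro powr_mono2) auto
  moreover have "(?V + 1) powr r \<le> ?V powr r + r * 2 powr (r - 1) * ?V powr (r - 1)"
    using powr_Suc_diff_le[of ?V r] n_le r by simp
  ultimately have "cluster_gen Y (\<lambda>Z. total_size Z powr r) n \<le> \<theta> * real n * ?V powr r
      + \<beta> * real n * (?V powr r + r * 2 powr (r - 1) * ?V powr (r - 1))
      + (\<Sum>j=1..n-1. split_rate n j) * ?V powr r"
    unfolding cluster_gen_total_size[OF n, of "\<lambda>x. x powr r"] using theta_pos beta_pos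
    by (intro add_mono mult_left_mono order.refl) simp_all
  then show ?thesis
    by (simp add: algebra_simps)
qed

lemma gen_total_size_powr_le:
  assumes r: "r \<ge> 1" and Y: "positive_sizes Y"
  shows "gen Y (\<lambda>Z. total_size Z powr r) \<le> (jump_rate Y + \<beta> * r * 2 powr (r - 1)) * total_size Y powr r"
proof -
  let ?V = "total_size Y"
  have "gen Y (\<lambda>Z. total_size Z powr r) \<le> (\<Sum>n\<in>set_mset Y. real (count Y n) *
      ((\<theta> * real n + \<beta> * real n + (\<Sum>j=1..n-1. split_rate n j)) * ?V powr r
        + \<beta> * r * 2 powr (r - 1) * (real n * ?V powr (r - 1))))"
    unfolding gen_def by (intro sum_mono mult_left_mono cluster_gen_total_size_powr_le r Y) auto
  also have "\<dots> = jump_rate Y * ?V powr r + \<beta> * r * 2 powr (r - 1) * (?V * ?V powr (r - 1))"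
    unfolding jump_rate_eq total_size_def pairing_eq_sum_count
    by (simp add: sum.distrib sum_distrib_left sum_distrib_right algebra_simps)
  also have "?V * ?V powr (r - 1) = ?V powr r"
    using powr_mult_base[OF total_size_nonneg, of Y "r - 1"] by simp
  finally show ?thesis
    by (simp add: algebra_simps)
qed

lemma sum_jump_expect_total_size_powr_le:
  "r \<ge> 1 \<Longrightarrow> t \<ge> 0 \<Longrightarrow> positive_sizes X
    \<Longrightarrow> (\<Sum>k<K. jump_expect k t X (\<lambda>Y. total_size Y powr r))
        \<le> exp (\<beta> * r * 2 powr (r - 1) * t) * total_size X powr r"
  using lyapunov_bound[of "\<lambda>Y. total_size Y powr r" "\<beta> * r * 2 powr (r - 1)"] gen_total_size_powr_le
  by simp

text \<open>With \<open>N\<^sub>t\<close> the number of jumps up to time \<open>t\<close>: \<open>prob_fewer_jumps K t X = P\<^bsub>X\<^esub>(N\<^sub>t < K)\<close> and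
  \<open>expected_jumps_min K t X = E\<^bsub>X\<^esub> min N\<^sub>t K\<close>.\<close>

definition prob_fewer_jumps :: "nat \<Rightarrow> real \<Rightarrow> nat multiset \<Rightarrow> real" where
  "prob_fewer_jumps K t X = (\<Sum>k<K. jump_expect k t X (\<lambda>_. 1))"

definition expected_jumps_min :: "nat \<Rightarrow> real \<Rightarrow> nat multiset \<Rightarrow> real" where
  "expected_jumps_min K t X = (\<Sum>j<K. 1 - prob_fewer_jumps (Suc j) t X)"

lemma prob_fewer_jumps_le_1: "positive_sizes X \<Longrightarrow> t \<ge> 0 \<Longrightarrow> prob_fewer_jumps K t X \<le> 1"
  unfolding prob_fewer_jumps_def using lyapunov_bound[of "\<lambda>_. 1" 0 X t K] by (simp add: gen_const)

lemma prob_fewer_jumps_mono: "t \<ge> 0 \<Longrightarrow> K \<le> K' \<Longrightarrow> prob_fewer_jumps K t X \<le> prob_fewer_jumps K' t X"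
  unfolding prob_fewer_jumps_def by (intro sum_mono2) (auto intro!: jump_expect_nonneg)

lemma expected_jumps_min_eq: "expected_jumps_min K t X = real K - (\<Sum>j<K. prob_fewer_jumps (Suc j) t X)"
  unfolding expected_jumps_min_def by (simp add: sum_subtractf)

lemma has_real_derivative_expected_jumps_min:
  assumes t: "t \<ge> 0"
  shows "((\<lambda>t. expected_jumps_min (Suc K) t X) has_real_derivative
    - jump_rate X * expected_jumps_min (Suc K) t X + gen X (\<lambda>Z. 1 + expected_jumps_min K t Z))
    (at t within {0..})"
proof -
  let ?P = "\<lambda>j Z. prob_fewer_jumps j t Z"
  have "((\<lambda>t. 1 - prob_fewer_jumps (Suc j) t X) has_real_derivative
      - (- jump_rate X * ?P (Suc j) X + gen X (?P j))) (at t within {0..})" for j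
    unfolding prob_fewer_jumps_def
    using DERIV_diff[OF DERIV_const[of 1] has_real_derivative_sum_jump_expect[OF t, where K = j and X = X and g = "\<lambda>_. 1"]]
    by simp
  then have deriv: "((\<lambda>t. expected_jumps_min (Suc K) t X) has_real_derivative
      (\<Sum>j<Suc K. - (- jump_rate X * ?P (Suc j) X + gen X (?P j)))) (at t within {0..})"
    unfolding expected_jumps_min_def by (intro DERIV_sum)
  have "(\<Sum>j<Suc K. gen X (?P j)) = gen X (\<lambda>Z. \<Sum>j<Suc K. ?P j Z)"
    by (rule gen_sum[symmetric]) simp
  also have "\<dots> = gen X (\<lambda>Z. \<Sum>j<K. ?P (Suc j) Z)"
    by (simp add: sum.lessThan_Suc_shift prob_fewer_jumps_def del: sum.lessThan_Suc)
  finally have shift: "(\<Sum>j<Suc K. gen X (?P j)) = gen X (\<lambda>Z. \<Sum>j<K. ?P (Suc j) Z)" .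
  have "gen X (\<lambda>Z. 1 + expected_jumps_min K t Z) = (1 + real K) * jump_rate X - gen X (\<lambda>Z. \<Sum>j<K. ?P (Suc j) Z)"
    unfolding expected_jumps_min_eq
    using gen_diff[of X "\<lambda>Z. 1 + real K" "\<lambda>Z. \<Sum>j<K. ?P (Suc j) Z"] gen_const[of X "1 + real K"]
    by (simp add: algebra_simps)
  then have "(\<Sum>j<Suc K. - (- jump_rate X * ?P (Suc j) X + gen X (?P j)))
      = - jump_rate X * expected_jumps_min (Suc K) t X + gen X (\<lambda>Z. 1 + expected_jumps_min K t Z)"
    unfolding expected_jumps_min_eq[of "Suc K"] sum_negf sum.distrib shift sum_distrib_left[symmetric]
    by (simp add: algebra_simps)
  with deriv show ?thesis
    by simp
qed

definition jumps_bound :: "real \<Rightarrow> real" where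
  "jumps_bound t = (\<theta> + \<beta> + \<gamma>) / \<beta> * (exp (\<beta> * t) - 1)"

lemma jumps_bound_nonneg: "t \<ge> 0 \<Longrightarrow> 0 \<le> jumps_bound t"
  unfolding jumps_bound_def using beta_pos theta_pos gamma_pos by simp

lemma has_real_derivative_jumps_bound:
  "(jumps_bound has_real_derivative \<beta> * jumps_bound t + (\<theta> + \<beta> + \<gamma>)) (at t within S)"
proof -
  have "(jumps_bound has_real_derivative (\<theta> + \<beta> + \<gamma>) / \<beta> * (exp (\<beta> * t) * \<beta>)) (at t within S)"
    unfolding jumps_bound_def[abs_def] by (auto intro!: derivative_eq_intros)
  moreover have "(\<theta> + \<beta> + \<gamma>) / \<beta> * (exp (\<beta> * t) * \<beta>) = \<beta> * jumps_bound t + (\<theta> + \<beta> + \<gamma>)"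
    unfolding jumps_bound_def using beta_pos by (simp add: field_simps)
  ultimately show ?thesis
    by simp
qed

text \<open>A state of total size \<open>V\<close> jumps at rate at most \<open>(\<theta> + \<beta> + \<gamma>) V\<close>, and the total size
  grows at rate at most \<open>\<beta>\<close>; this bounds the expected number of jumps uniformly in \<open>K\<close>.\<close>

lemma expected_jumps_min_le:
  "positive_sizes X \<Longrightarrow> t \<ge> 0 \<Longrightarrow> expected_jumps_min K t X \<le> jumps_bound t * total_size X"
proof (induction K arbitrary: X t)
  case 0
  then show ?case
    using jumps_bound_nonneg total_size_nonneg[of X] by (simp add: expected_jumps_min_def)
next
  case (Suc K)
  define H where "H t = (\<beta> * jumps_bound t + (\<theta> + \<beta> + \<gamma>)) * total_size X
    + jump_rate X * jumps_bound t * total_size X" for t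
  have bound_deriv: "((\<lambda>t. jumps_bound t * total_size X) has_real_derivative
      - jump_rate X * (jumps_bound t * total_size X) + H t) (at t within {0..})" for t
    by (rule DERIV_cong[OF DERIV_cmult_right[OF has_real_derivative_jumps_bound]]) (simp add: H_def algebra_simps)
  have bound: "gen X (\<lambda>Z. 1 + expected_jumps_min K t Z) \<le> H t" if "t \<ge> 0" for t
  proof -
    have "gen X (\<lambda>Z. 1 + expected_jumps_min K t Z) \<le> gen X (\<lambda>Z. 1 + jumps_bound t * total_size Z)"
      using Suc.IH Suc.prems(1) that
      by (intro gen_mono add_left_mono) (blast dest: positive_sizes_successors)
    also have "\<dots> = jump_rate X + jumps_bound t * gen X total_size"
      using gen_linear[of X 1 "\<lambda>_. 1" "jumps_bound t" total_size] by (simp add: gen_const)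
    also have "\<dots> \<le> jump_rate X + jumps_bound t * ((jump_rate X + \<beta>) * total_size X)"
      using gen_total_size jumps_bound_nonneg[OF that] by (intro add_left_mono mult_left_mono)
    also have "\<dots> \<le> H t"
      unfolding H_def using jump_rate_le_total_size[of X] by (simp add: algebra_simps)
    finally show ?thesis .
  qed
  have "prob_fewer_jumps (Suc j) 0 X = 1" for j
    unfolding prob_fewer_jumps_def by (rule sum_jump_expect_time_0)
  then have init: "expected_jumps_min (Suc K) 0 X \<le> jumps_bound 0 * total_size X"
    by (simp add: expected_jumps_min_def jumps_bound_def)
  show ?case
    by (rule linear_ode_comparison[of "\<lambda>t. expected_jumps_min (Suc K) t X" "- jump_rate X"
        "\<lambda>t. gen X (\<lambda>Z. 1 + expected_jumps_min K t Z)" "\<lambda>t. jumps_bound t * total_size X" H t,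
        OF has_real_derivative_expected_jumps_min bound_deriv bound init Suc.prems(2)])
qed

lemma prob_fewer_jumps_tendsto_1:
  assumes X: "positive_sizes X" and t: "t \<ge> 0"
  shows "(\<lambda>K. prob_fewer_jumps K t X) \<longlonglongrightarrow> 1"
proof -
  define C where "C = jumps_bound t * total_size X"
  have lower: "1 - C / real K \<le> prob_fewer_jumps K t X" if "K \<ge> 1" for K
  proof -
    have "real K * (1 - prob_fewer_jumps K t X) \<le> expected_jumps_min K t X"
      unfolding expected_jumps_min_def using sum_mono[of "{..<K}" "\<lambda>_. 1 - prob_fewer_jumps K t X"]
      by (simp add: prob_fewer_jumps_mono[OF t])
    also have "\<dots> \<le> C"
      unfolding C_def by (rule expected_jumps_min_le[OF X t])
    finally show ?thesis
      using that by (simp add: field_simps)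
  qed
  have "\<forall>\<^sub>F K in sequentially. 1 - C / real K \<le> prob_fewer_jumps K t X"
    using lower by (intro eventually_sequentiallyI[of 1])
  moreover have "\<forall>\<^sub>F K in sequentially. prob_fewer_jumps K t X \<le> 1"
    using prob_fewer_jumps_le_1[OF X t] by simp
  moreover have "(\<lambda>K. 1 - C / real K) \<longlonglongrightarrow> 1"
    by (intro tendsto_eq_intros tendsto_divide_0[OF tendsto_const]
        filterlim_at_top_imp_at_infinity[OF filterlim_real_sequentially]) auto
  ultimately show ?thesis
    using tendsto_const by (rule tendsto_sandwich)
qed

lemma jump_expect_const_sums:
  "positive_sizes X \<Longrightarrow> t \<ge> 0 \<Longrightarrow> (\<lambda>k. jump_expect k t X (\<lambda>_. 1)) sums 1"
  using prob_fewer_jumps_tendsto_1 unfolding sums_def prob_fewer_jumps_def by simp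

section \<open>The first moment semigroup\<close>

definition mean :: "real \<Rightarrow> nat multiset \<Rightarrow> (nat multiset \<Rightarrow> real) \<Rightarrow> real" where
  "mean t X g = (\<Sum>k. jump_expect k t X g)"

definition size_bounded :: "(nat multiset \<Rightarrow> real) \<Rightarrow> real \<Rightarrow> real \<Rightarrow> bool" where
  "size_bounded g C r \<longleftrightarrow> r \<ge> 1 \<and> 0 \<le> C \<and> (\<forall>Y. positive_sizes Y \<longrightarrow> \<bar>g Y\<bar> \<le> C * total_size Y powr r)"

definition poly_bounded :: "(nat multiset \<Rightarrow> real) \<Rightarrow> bool" where
  "poly_bounded g \<longleftrightarrow> (\<exists>C r. size_bounded g C r)"

lemma summable_jump_expect_total_size_powr:
  assumes "positive_sizes X" "t \<ge> 0" "r \<ge> 1"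
  shows "summable (\<lambda>k. jump_expect k t X (\<lambda>Y. total_size Y powr r))"
proof (rule bounded_imp_summable)
  show "0 \<le> jump_expect k t X (\<lambda>Y. total_size Y powr r)" for k
    using assms by (intro jump_expect_nonneg) auto
  show "(\<Sum>k\<le>n. jump_expect k t X (\<lambda>Y. total_size Y powr r))
      \<le> exp (\<beta> * r * 2 powr (r - 1) * t) * total_size X powr r" for n
    using sum_jump_expect_total_size_powr_le[OF assms(3,2,1), of "Suc n"] unfolding lessThan_Suc_atMost .
qed

lemma mean_total_size_powr_le:
  assumes "positive_sizes X" "t \<ge> 0" "r \<ge> 1"
  shows "mean t X (\<lambda>Y. total_size Y powr r) \<le> exp (\<beta> * r * 2 powr (r - 1) * t) * total_size X powr r"
  unfolding mean_def
  using summable_jump_expect_total_size_powr[OF assms] sum_jump_expect_total_size_powr_le[OF assms(3,2,1)]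
  by (rule suminf_le_const)

lemma abs_jump_expect_le_size_bounded:
  assumes "positive_sizes X" "t \<ge> 0" "size_bounded g C r"
  shows "\<bar>jump_expect k t X g\<bar> \<le> C * jump_expect k t X (\<lambda>Y. total_size Y powr r)"
proof -
  have "\<bar>jump_expect k t X g\<bar> \<le> jump_expect k t X (\<lambda>Y. \<bar>g Y\<bar>)"
    by (rule abs_jump_expect_le[OF assms(2)])
  also have "\<dots> \<le> jump_expect k t X (\<lambda>Y. C * total_size Y powr r)"
    using assms positive_sizes_reachable unfolding size_bounded_def by (intro jump_expect_mono) auto
  finally show ?thesis
    by (simp add: jump_expect_cmult)
qed

lemma summable_abs_jump_expect_size_bounded:
  assumes "positive_sizes X" "t \<ge> 0" "size_bounded g C r"
  shows "summable (\<lambda>k. \<bar>jump_expect k t X g\<bar>)"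
proof (rule summable_comparison_test'[of "\<lambda>k. C * jump_expect k t X (\<lambda>Y. total_size Y powr r)" 0])
  show "summable (\<lambda>k. C * jump_expect k t X (\<lambda>Y. total_size Y powr r))"
    using assms summable_jump_expect_total_size_powr unfolding size_bounded_def
    by (intro summable_mult) auto
qed (use abs_jump_expect_le_size_bounded[OF assms] in simp)

lemma summable_abs_jump_expect:
  "poly_bounded g \<Longrightarrow> positive_sizes X \<Longrightarrow> t \<ge> 0 \<Longrightarrow> summable (\<lambda>k. \<bar>jump_expect k t X g\<bar>)"
  unfolding poly_bounded_def using summable_abs_jump_expect_size_bounded by blast

lemma summable_jump_expect:
  "poly_bounded g \<Longrightarrow> positive_sizes X \<Longrightarrow> t \<ge> 0 \<Longrightarrow> summable (\<lambda>k. jump_expect k t X g)"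
  by (rule summable_rabs_cancel[OF summable_abs_jump_expect])

lemma abs_mean_le:
  assumes "positive_sizes X" "t \<ge> 0" "size_bounded g C r"
  shows "\<bar>mean t X g\<bar> \<le> C * exp (\<beta> * r * 2 powr (r - 1) * t) * total_size X powr r"
proof -
  have r: "r \<ge> 1" "C \<ge> 0"
    using assms(3) unfolding size_bounded_def by auto
  note summable = summable_abs_jump_expect_size_bounded[OF assms]
    summable_jump_expect_total_size_powr[OF assms(1,2) r(1)]
  have "\<bar>mean t X g\<bar> \<le> (\<Sum>k. \<bar>jump_expect k t X g\<bar>)"
    unfolding mean_def using summable(1) by (rule summable_rabs)
  also have "\<dots> \<le> (\<Sum>k. C * jump_expect k t X (\<lambda>Y. total_size Y powr r))"
    using summable abs_jump_expect_le_size_bounded[OF assms] by (intro suminf_le summable_mult) auto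
  also have "\<dots> = C * mean t X (\<lambda>Y. total_size Y powr r)"
    unfolding mean_def using summable(2) by (rule suminf_mult)
  also have "\<dots> \<le> C * (exp (\<beta> * r * 2 powr (r - 1) * t) * total_size X powr r)"
    using mean_total_size_powr_le[OF assms(1,2) r(1)] r by (intro mult_left_mono) auto
  finally show ?thesis
    by (simp add: mult.assoc)
qed

lemma mean_linear:
  assumes "poly_bounded g" "poly_bounded h" "positive_sizes X" "t \<ge> 0"
  shows "mean t X (\<lambda>Y. a * g Y + b * h Y) = a * mean t X g + b * mean t X h"
proof -
  have g: "summable (\<lambda>k. jump_expect k t X g)" and h: "summable (\<lambda>k. jump_expect k t X h)"
    using summable_jump_expect assms by auto
  have "mean t X (\<lambda>Y. a * g Y + b * h Y) = (\<Sum>k. a * jump_expect k t X g) + (\<Sum>k. b * jump_expect k t X h)"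
    unfolding mean_def jump_expect_linear using g h by (intro suminf_add[symmetric] summable_mult)
  also have "\<dots> = a * mean t X g + b * mean t X h"
    unfolding mean_def using g h by (simp add: suminf_mult)
  finally show ?thesis .
qed

lemma mean_cong:
  "positive_sizes X \<Longrightarrow> (\<And>Y. positive_sizes Y \<Longrightarrow> g Y = h Y) \<Longrightarrow> mean t X g = mean t X h"
  unfolding mean_def using positive_sizes_reachable by (intro suminf_cong jump_expect_cong) blast

lemma mean_nonneg:
  "poly_bounded g \<Longrightarrow> positive_sizes X \<Longrightarrow> t \<ge> 0 \<Longrightarrow> (\<And>Y. positive_sizes Y \<Longrightarrow> 0 \<le> g Y) \<Longrightarrow> 0 \<le> mean t X g"
  unfolding mean_def using positive_sizes_reachable
  by (intro suminf_nonneg summable_jump_expect jump_expect_nonneg) auto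

lemma mean_time_0: "mean 0 X g = g X"
  unfolding mean_def jump_expect_time_0 by (simp add: sums_single[THEN sums_unique[symmetric]])

lemma total_size_eq_0_or_ge_1: "positive_sizes Y \<Longrightarrow> total_size Y = 0 \<or> total_size Y \<ge> 1"
proof (cases "Y = {#}")
  case False
  assume Y: "positive_sizes Y"
  from False obtain n where "n \<in># Y"
    by (meson multiset_nonemptyE)
  then show ?thesis
    using member_le_total_size positive_sizes_member[OF Y] by force
qed (simp add: total_size_def)

lemma size_bounded_mono:
  assumes "size_bounded g C r" "C \<le> C'" "r \<le> r'"
  shows "size_bounded g C' r'"
  unfolding size_bounded_def
proof (intro conjI allI impI)
  fix Y assume Y: "positive_sizes Y"
  have "total_size Y powr r \<le> total_size Y powr r'"
    using total_size_eq_0_or_ge_1[OF Y] assms(3) by (auto intro: powr_mono)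
  have "\<bar>g Y\<bar> \<le> C * total_size Y powr r"
    using assms(1) Y unfolding size_bounded_def by auto
  also have "\<dots> \<le> C' * total_size Y powr r'"
    using \<open>total_size Y powr r \<le> total_size Y powr r'\<close> assms(1,2)
    by (intro mult_mono) (auto simp: size_bounded_def)
  finally show "\<bar>g Y\<bar> \<le> C' * total_size Y powr r'" .
qed (use assms in \<open>auto simp: size_bounded_def\<close>)

lemma poly_bounded_linear:
  assumes "poly_bounded g" "poly_bounded h"
  shows "poly_bounded (\<lambda>Y. a * g Y + b * h Y)"
proof -
  obtain C1 r1 C2 r2 where "size_bounded g C1 r1" "size_bounded h C2 r2"
    using assms unfolding poly_bounded_def by blast
  then have g: "size_bounded g C1 (max r1 r2)" and h: "size_bounded h C2 (max r1 r2)"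
    using size_bounded_mono by fastforce+
  have "size_bounded (\<lambda>Y. a * g Y + b * h Y) (\<bar>a\<bar> * C1 + \<bar>b\<bar> * C2) (max r1 r2)"
    unfolding size_bounded_def
  proof (intro conjI allI impI)
    fix Y assume Y: "positive_sizes Y"
    have "\<bar>a * g Y + b * h Y\<bar> \<le> \<bar>a\<bar> * \<bar>g Y\<bar> + \<bar>b\<bar> * \<bar>h Y\<bar>"
      by (simp add: abs_mult abs_triangle_ineq[THEN order.trans])
    also have "\<dots> \<le> \<bar>a\<bar> * (C1 * total_size Y powr max r1 r2) + \<bar>b\<bar> * (C2 * total_size Y powr max r1 r2)"
      using g h Y unfolding size_bounded_def by (intro add_mono mult_left_mono) auto
    finally show "\<bar>a * g Y + b * h Y\<bar> \<le> (\<bar>a\<bar> * C1 + \<bar>b\<bar> * C2) * total_size Y powr max r1 r2"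
      by (simp add: algebra_simps)
  qed (use g h in \<open>auto simp: size_bounded_def\<close>)
  then show ?thesis
    unfolding poly_bounded_def by blast
qed

lemma size_moment_le_total_size_powr: "r \<ge> 1 \<Longrightarrow> size_moment r Y \<le> total_size Y powr r"
proof (induction Y)
  case (add n Y)
  have "size_moment r (add_mset n Y) \<le> real n powr r + total_size Y powr r"
    using add by (simp add: size_moment_def)
  also have "\<dots> \<le> total_size (add_mset n Y) powr r"
    using add.prems total_size_nonneg[of Y] powr_superadditive[of "real n" "total_size Y" r]
    by (simp add: total_size_def)
  finally show ?case .
qed (simp add: size_moment_def total_size_def)

lemma size_bounded_pairing:
  assumes r: "r \<ge> 1" and C: "0 \<le> C" and f: "\<And>n. n \<ge> 1 \<Longrightarrow> \<bar>f n\<bar> \<le> C * real n powr r"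
  shows "size_bounded (\<lambda>Y. pairing Y f) C r"
  unfolding size_bounded_def
proof (intro conjI allI impI)
  fix Y assume Y: "positive_sizes Y"
  have "\<bar>pairing Y f\<bar> \<le> pairing Y (\<lambda>m. \<bar>f m\<bar>)"
    by (rule abs_pairing_le)
  also have "\<dots> \<le> pairing Y (\<lambda>m. C * real m powr r)"
    using f positive_sizes_member[OF Y] by (intro pairing_mono) auto
  also have "\<dots> \<le> C * total_size Y powr r"
    using size_moment_le_total_size_powr[OF r, of Y] C
    unfolding pairing_cmult size_moment_def by (intro mult_left_mono)
  finally show "\<bar>pairing Y f\<bar> \<le> C * total_size Y powr r" .
qed (use assms in auto)

lemma poly_bounded_pairing:
  assumes "classB f"
  shows "poly_bounded (\<lambda>Y. pairing Y f)"
proof -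
  obtain C r where "r \<ge> 1" "C \<ge> 0" "\<And>n. n \<ge> 1 \<Longrightarrow> \<bar>f n\<bar> \<le> C * real n powr r"
    using classB_powr_bound[OF assms] by metis
  from size_bounded_pairing[OF this] show ?thesis
    unfolding poly_bounded_def by blast
qed

lemma size_bounded_mean:
  assumes g: "size_bounded g C r" and t: "t \<ge> 0"
  shows "size_bounded (\<lambda>X. mean t X g) (C * exp (\<beta> * r * 2 powr (r - 1) * t)) r"
proof -
  have "r \<ge> 1" "C \<ge> 0"
    using g by (auto simp: size_bounded_def)
  with abs_mean_le[OF _ t g] show ?thesis
    unfolding size_bounded_def by simp
qed

lemma poly_bounded_mean: "poly_bounded g \<Longrightarrow> t \<ge> 0 \<Longrightarrow> poly_bounded (\<lambda>X. mean t X g)"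
  unfolding poly_bounded_def using size_bounded_mean by blast

lemma poly_bounded_jump_rate_mult:
  assumes "size_bounded g C r"
  shows "poly_bounded (\<lambda>Y. jump_rate Y * g Y)"
proof -
  have "size_bounded (\<lambda>Y. jump_rate Y * g Y) ((\<theta> + \<beta> + \<gamma>) * C) (r + 1)"
    unfolding size_bounded_def
  proof (intro conjI allI impI)
    fix Y assume Y: "positive_sizes Y"
    have "\<bar>jump_rate Y * g Y\<bar> \<le> ((\<theta> + \<beta> + \<gamma>) * total_size Y) * (C * total_size Y powr r)"
      using jump_rate_le_total_size[of Y] assms Y jump_rate_nonneg total_size_nonneg[of Y]
        beta_pos theta_pos gamma_pos
      unfolding size_bounded_def abs_mult by (intro mult_mono) auto
    also have "\<dots> = (\<theta> + \<beta> + \<gamma>) * C * total_size Y powr (r + 1)"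
      using powr_mult_base[OF total_size_nonneg, of Y r] by (simp add: algebra_simps)
    finally show "\<bar>jump_rate Y * g Y\<bar> \<le> (\<theta> + \<beta> + \<gamma>) * C * total_size Y powr (r + 1)" .
  qed (use assms beta_pos theta_pos gamma_pos in \<open>auto simp: size_bounded_def\<close>)
  then show ?thesis
    unfolding poly_bounded_def by blast
qed

lemma mean_const_1: "positive_sizes X \<Longrightarrow> t \<ge> 0 \<Longrightarrow> mean t X (\<lambda>_. 1) = 1"
  unfolding mean_def using jump_expect_const_sums sums_unique by metis

text \<open>Independence of the clusters: by the branching property the jump expansion of
  \<open>X\<^sub>1 + X\<^sub>2\<close> is the Cauchy product of those of \<open>X\<^sub>1\<close> and \<open>X\<^sub>2\<close>, and the total mass is \<open>1\<close>.\<close>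

lemma mean_union:
  assumes g: "poly_bounded g" and additive: "\<And>Y1 Y2. g (Y1 + Y2) = g Y1 + g Y2"
    and X1: "positive_sizes X1" and X2: "positive_sizes X2" and t: "t \<ge> 0"
  shows "mean t (X1 + X2) g = mean t X1 g + mean t X2 g"
proof -
  define a1 where "a1 k = jump_expect k t X1 g" for k
  define a2 where "a2 k = jump_expect k t X2 g" for k
  define m1 where "m1 k = jump_expect k t X1 (\<lambda>_. 1)" for k
  define m2 where "m2 k = jump_expect k t X2 (\<lambda>_. 1)" for k
  have expand: "jump_expect k t (X1 + X2) g = (\<Sum>i\<le>k. a1 i * m2 (k - i)) + (\<Sum>i\<le>k. m1 i * a2 (k - i))" for k
  proof -
    have "jump_expect j t X2 (\<lambda>Y2. g (Y1 + Y2)) = g Y1 * m2 j + a2 j" for j Y1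
      unfolding additive m2_def a2_def using jump_expect_linear[of j t X2 "g Y1" "\<lambda>_. 1" 1 g] by simp
    moreover have "jump_expect i t X1 (\<lambda>Y1. g Y1 * m2 j + a2 j) = a1 i * m2 j + m1 i * a2 j" for i j
      unfolding a1_def m1_def using jump_expect_linear[of i t X1 "m2 j" g "a2 j" "\<lambda>_. 1"]
      by (simp add: mult.commute)
    ultimately show ?thesis
      by (simp add: jump_expect_union[OF t] sum.distrib)
  qed
  have "summable (\<lambda>k. norm (a1 k))" "summable (\<lambda>k. norm (a2 k))"
    unfolding a1_def a2_def using summable_abs_jump_expect[OF g] X1 X2 t by simp_all
  moreover have "m1 k \<ge> 0" "m2 k \<ge> 0" for k
    unfolding m1_def m2_def using t by (auto intro!: jump_expect_nonneg)
  then have "summable (\<lambda>k. norm (m1 k))" "summable (\<lambda>k. norm (m2 k))"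
    unfolding m1_def m2_def using jump_expect_const_sums[OF X1 t] jump_expect_const_sums[OF X2 t]
    by (simp_all add: sums_summable)
  ultimately have "mean t (X1 + X2) g = (\<Sum>k. a1 k) * (\<Sum>k. m2 k) + (\<Sum>k. m1 k) * (\<Sum>k. a2 k)"
    unfolding mean_def expand
    by (simp add: suminf_add[symmetric] summable_Cauchy_product Cauchy_product)
  then show ?thesis
    using mean_const_1[OF X1 t] mean_const_1[OF X2 t] unfolding mean_def a1_def a2_def m1_def m2_def
    by simp
qed

lemma mean_empty: "mean t {#} g = g {#}"
proof -
  have "jump_expect k t {#} g = (if k = 0 then g {#} else 0)" for k
    by (cases k) (auto simp: jump_expect_def gfi_qtot_def successors_def)
  then show ?thesis
    unfolding mean_def by (simp add: sums_single[THEN sums_unique[symmetric]])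
qed

lemma mean_pairing:
  assumes f: "classB f" and t: "t \<ge> 0"
  shows "positive_sizes Z \<Longrightarrow> mean t Z (\<lambda>Y. pairing Y f) = pairing Z (\<lambda>z. mean t {#z#} (\<lambda>Y. pairing Y f))"
proof (induction Z)
  case (add z Z)
  then have "positive_sizes {#z#}" "positive_sizes Z"
    unfolding positive_sizes_def by auto
  then have "mean t ({#z#} + Z) (\<lambda>Y. pairing Y f) = mean t {#z#} (\<lambda>Y. pairing Y f) + mean t Z (\<lambda>Y. pairing Y f)"
    by (intro mean_union poly_bounded_pairing f t) (simp_all add: pairing_union)
  with add.IH[OF \<open>positive_sizes Z\<close>] show ?case
    by simp
qed (simp add: mean_empty)

lemma jump_expect_suminf:
  assumes "\<And>Z. Z \<in> reachable i X \<Longrightarrow> summable (\<lambda>j. h j Z)"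
  shows "summable (\<lambda>j. jump_expect i s X (h j))"
    and "jump_expect i s X (\<lambda>Z. \<Sum>j. h j Z) = (\<Sum>j. jump_expect i s X (h j))"
proof -
  have *: "summable (\<lambda>j. jump_prob i s X Z * h j Z)" if "Z \<in> reachable i X" for Z
    using assms[OF that] by (rule summable_mult)
  show "summable (\<lambda>j. jump_expect i s X (h j))"
    unfolding jump_expect_def using * by (intro summable_sum) auto
  show "jump_expect i s X (\<lambda>Z. \<Sum>j. h j Z) = (\<Sum>j. jump_expect i s X (h j))"
    unfolding jump_expect_def using * by (simp add: suminf_mult[symmetric] suminf_sum assms)
qed

lemma mean_add_time_nonneg:
  assumes g: "poly_bounded g" and g_nonneg: "\<And>Y. 0 \<le> g Y"
    and X: "positive_sizes X" and s: "s \<ge> 0" and t: "t \<ge> 0"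
  shows "mean (s + t) X g = mean s X (\<lambda>Z. mean t Z g)"
proof -
  define a where "a i j = jump_expect i s X (\<lambda>Z. jump_expect j t Z g)" for i j
  have a_nonneg: "0 \<le> a i j" for i j
    unfolding a_def using s t g_nonneg by (intro jump_expect_nonneg) auto
  have row: "summable (\<lambda>j. a i j)" "(\<Sum>j. a i j) = jump_expect i s X (\<lambda>Z. mean t Z g)" for i
    unfolding a_def mean_def
    using jump_expect_suminf[of i X "\<lambda>j Z. jump_expect j t Z g" s]
      summable_jump_expect[OF g positive_sizes_reachable[OF X] t] by auto
  have row_nonneg: "0 \<le> jump_expect i s X (\<lambda>Z. mean t Z g)" for i
    unfolding row(2)[symmetric] by (rule suminf_nonneg[OF row(1) a_nonneg])
  have "ennreal (mean (s + t) X g) = (\<Sum>k. ennreal (jump_expect k (s + t) X g))"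
    unfolding mean_def using summable_jump_expect[OF g X] s t g_nonneg
    by (intro suminf_ennreal2[symmetric] jump_expect_nonneg) auto
  also have "\<dots> = (\<Sum>k. \<Sum>i\<le>k. ennreal (a i (k - i)))"
    unfolding jump_expect_add_time[OF t s] a_def using a_nonneg[unfolded a_def] by (simp add: sum_ennreal)
  also have "\<dots> = (\<Sum>i. \<Sum>j. ennreal (a i j))"
    by (rule suminf_ennreal_diagonal)
  also have "\<dots> = (\<Sum>i. ennreal (jump_expect i s X (\<lambda>Z. mean t Z g)))"
    using row a_nonneg by (simp add: suminf_ennreal2)
  also have "\<dots> = ennreal (mean s X (\<lambda>Z. mean t Z g))"
    unfolding mean_def[of s]
    using row_nonneg summable_jump_expect[OF poly_bounded_mean[OF g t] X s]
    by (rule suminf_ennreal2)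
  finally show ?thesis
    using mean_nonneg[OF g X] mean_nonneg[OF poly_bounded_mean[OF g t] X s] mean_nonneg[OF g _ t]
      positive_sizes_reachable g_nonneg s t
    by (simp add: ennreal_inj)
qed

lemma abs_gfi_L_le:
  assumes n: "n \<ge> 1" and B: "\<And>m. 1 \<le> m \<Longrightarrow> m \<le> n + 1 \<Longrightarrow> \<bar>f m\<bar> \<le> B"
  shows "\<bar>gfi_L \<beta> \<theta> \<gamma> f n\<bar> \<le> (2 * \<beta> + \<theta> + 3 * \<gamma>) * real n * B"
proof -
  have B_nonneg: "0 \<le> B"
    using B[of n] n by auto
  have grow: "\<bar>\<beta> * real n * (f (n + 1) - f n)\<bar> \<le> \<beta> * real n * (2 * B)"
    using B[of "n + 1"] B[of n] n beta_pos by (simp add: abs_mult mult_left_mono)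
  have die: "\<bar>\<theta> * real n * f n\<bar> \<le> \<theta> * real n * B"
    using B[of n] n theta_pos by (simp add: abs_mult mult_left_mono)
  have "\<bar>\<Sum>j=1..n-1. split_rate n j * (f j + f (n - j) - f n)\<bar> \<le> (\<Sum>j=1..n-1. split_rate n j * (3 * B))"
  proof (rule order.trans[OF sum_abs], intro sum_mono)
    fix j assume "j \<in> {1..n-1}"
    then have "\<bar>f j + f (n - j) - f n\<bar> \<le> 3 * B"
      using B[of j] B[of "n - j"] B[of n] n by (simp add: abs_le_iff) linarith
    then show "\<bar>split_rate n j * (f j + f (n - j) - f n)\<bar> \<le> split_rate n j * (3 * B)"
      using split_rate_nonneg by (simp add: abs_mult mult_left_mono)
  qed
  also have "\<dots> \<le> \<gamma> * real n * (3 * B)"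
    unfolding sum_distrib_right[symmetric] using sum_split_rate_le B_nonneg by (intro mult_right_mono) auto
  finally have split: "\<bar>\<Sum>j=1..n-1. split_rate n j * (f j + f (n - j) - f n)\<bar> \<le> \<gamma> * real n * (3 * B)" .
  have "\<bar>gfi_L \<beta> \<theta> \<gamma> f n\<bar> \<le> \<beta> * real n * (2 * B) + \<theta> * real n * B + \<gamma> * real n * (3 * B)"
    using grow die split unfolding gfi_L_def split_rate_def by linarith
  then show ?thesis
    by (simp add: algebra_simps)
qed

lemma classB_gfi_L:
  assumes "classB f"
  shows "classB (gfi_L \<beta> \<theta> \<gamma> f)"
proof -
  obtain C r where r: "r \<ge> 1" and C: "0 \<le> C" and f: "\<And>n. n \<ge> 1 \<Longrightarrow> \<bar>f n\<bar> \<le> C * real n powr r"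
    using classB_powr_bound[OF assms] by metis
  have "\<bar>gfi_L \<beta> \<theta> \<gamma> f n\<bar> \<le> (2 * \<beta> + \<theta> + 3 * \<gamma>) * C * 2 powr r * real n powr (r + 1)"
    if n: "n \<ge> 1" for n
  proof -
    have "\<bar>f m\<bar> \<le> C * 2 powr r * real n powr r" if "1 \<le> m" "m \<le> n + 1" for m
    proof -
      have "real m powr r \<le> (2 * real n) powr r"
        using that n r by (intro powr_mono2) auto
      then have "C * real m powr r \<le> C * (2 powr r * real n powr r)"
        using C by (simp add: powr_mult mult_left_mono)
      then show ?thesis
        using f[OF that(1)] by (simp add: mult.assoc)
    qed
    from abs_gfi_L_le[OF n this]
    have "\<bar>gfi_L \<beta> \<theta> \<gamma> f n\<bar> \<le> (2 * \<beta> + \<theta> + 3 * \<gamma>) * C * 2 powr r * (real n * real n powr r)"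
      by (simp add: algebra_simps)
    also have "real n * real n powr r = real n powr (r + 1)"
      using powr_mult_base[of "real n" r] by (simp add: add.commute)
    finally show ?thesis .
  qed
  then show ?thesis
    unfolding classB_def using r by (intro exI[of _ "r + 1"]) auto
qed

lemma poly_bounded_gen_pairing:
  assumes f: "classB f"
  shows "poly_bounded (\<lambda>Y. gen Y (\<lambda>Z. pairing Z f))"
proof -
  obtain C r where "size_bounded (\<lambda>Y. pairing Y f) C r"
    using poly_bounded_pairing[OF f] unfolding poly_bounded_def by blast
  then have "poly_bounded (\<lambda>Y. jump_rate Y * pairing Y f)"
    by (rule poly_bounded_jump_rate_mult)
  from poly_bounded_linear[OF this poly_bounded_pairing[OF classB_gfi_L[OF f]], of 1 1]
  show ?thesis
    by (simp add: gen_pairing)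
qed

lemma has_real_derivative_sum_jump_expect_pairing:
  assumes s: "s \<ge> 0"
  shows "((\<lambda>s. \<Sum>k<Suc K. jump_expect k s X (\<lambda>Y. pairing Y f)) has_real_derivative
    (\<Sum>k<Suc K. jump_expect k s X (\<lambda>Y. pairing Y (gfi_L \<beta> \<theta> \<gamma> f)))
      - jump_expect K s X (\<lambda>Y. gen Y (\<lambda>Z. pairing Z f))) (at s within {0..})"
proof -
  let ?g = "\<lambda>Y. pairing Y f" and ?Lg = "\<lambda>Y. gen Y (\<lambda>Z. pairing Z f)"
  have deriv: "((\<lambda>s. \<Sum>k<Suc K. jump_expect k s X ?g) has_real_derivative
      (\<Sum>k<Suc K. jump_expect k s X (\<lambda>Y. - jump_rate Y * ?g Y)
        + (if k = 0 then 0 else jump_expect (k - 1) s X ?Lg))) (at s within {0..})"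
    by (intro DERIV_sum has_real_derivative_jump_expect_forward s)
  have "jump_expect k s X (\<lambda>Y. pairing Y (gfi_L \<beta> \<theta> \<gamma> f))
      = jump_expect k s X (\<lambda>Y. - jump_rate Y * ?g Y) + jump_expect k s X ?Lg" for k
    unfolding jump_expect_add[symmetric] by (rule jump_expect_cong) (simp add: gen_pairing)
  then have "(\<Sum>k<Suc K. jump_expect k s X (\<lambda>Y. pairing Y (gfi_L \<beta> \<theta> \<gamma> f)))
      = (\<Sum>k<Suc K. jump_expect k s X (\<lambda>Y. - jump_rate Y * ?g Y)) + (\<Sum>k<K. jump_expect k s X ?Lg)
        + jump_expect K s X ?Lg"
    by (simp add: sum.distrib)
  moreover have "(\<Sum>k<Suc K. if k = 0 then 0 else jump_expect (k - 1) s X ?Lg) = (\<Sum>k<K. jump_expect k s X ?Lg)"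
    by (subst sum.lessThan_Suc_shift) simp
  ultimately show ?thesis
    using deriv by (simp add: sum.distrib del: sum.lessThan_Suc)
qed

lemma sum_abs_jump_expect_le:
  assumes X: "positive_sizes X" and s: "s \<in> {0..t}" and g: "size_bounded g C r"
  shows "(\<Sum>k<K. \<bar>jump_expect k s X g\<bar>) \<le> C * exp (\<beta> * r * 2 powr (r - 1) * t) * total_size X powr r"
proof -
  have r: "r \<ge> 1" "C \<ge> 0"
    using g unfolding size_bounded_def by auto
  have "(\<Sum>k<K. \<bar>jump_expect k s X g\<bar>) \<le> C * (\<Sum>k<K. jump_expect k s X (\<lambda>Y. total_size Y powr r))"
    unfolding sum_distrib_left using abs_jump_expect_le_size_bounded[OF X _ g] s by (intro sum_mono) auto
  also have "\<dots> \<le> C * (exp (\<beta> * r * 2 powr (r - 1) * s) * total_size X powr r)"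
    using sum_jump_expect_total_size_powr_le[OF r(1) _ X] s r(2) by (intro mult_left_mono) auto
  also have "\<dots> \<le> C * (exp (\<beta> * r * 2 powr (r - 1) * t) * total_size X powr r)"
    using s r beta_pos by (intro mult_left_mono mult_right_mono) auto
  finally show ?thesis
    by (simp add: mult.assoc)
qed

lemma LIMSEQ_partial_sums_mean:
  "poly_bounded g \<Longrightarrow> positive_sizes X \<Longrightarrow> t \<ge> 0
    \<Longrightarrow> (\<lambda>K. \<Sum>k<Suc K. jump_expect k t X g) \<longlonglongrightarrow> mean t X g"
  unfolding mean_def by (intro LIMSEQ_Suc summable_LIMSEQ summable_jump_expect)

lemma abs_partial_forward_sum_le:
  assumes X: "positive_sizes X" and s: "s \<in> {0..t}"
    and g: "size_bounded g C1 r1" and h: "size_bounded h C2 r2"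
  shows "\<bar>(\<Sum>k<Suc K. jump_expect k s X g) - jump_expect K s X h\<bar>
    \<le> C1 * exp (\<beta> * r1 * 2 powr (r1 - 1) * t) * total_size X powr r1
      + C2 * exp (\<beta> * r2 * 2 powr (r2 - 1) * t) * total_size X powr r2"
proof -
  have "\<bar>\<Sum>k<Suc K. jump_expect k s X g\<bar> \<le> (\<Sum>k<Suc K. \<bar>jump_expect k s X g\<bar>)"
    by (rule sum_abs)
  moreover have "\<bar>jump_expect K s X h\<bar> \<le> (\<Sum>k<Suc K. \<bar>jump_expect k s X h\<bar>)"
    by (rule member_le_sum) auto
  ultimately show ?thesis
    using sum_abs_jump_expect_le[OF X s g, of "Suc K"] sum_abs_jump_expect_le[OF X s h, of "Suc K"]
      abs_triangle_ineq4[of "\<Sum>k<Suc K. jump_expect k s X g" "jump_expect K s X h"]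
    by linarith
qed

lemma has_integral_mean_gfi_L:
  assumes f: "classB f" and X: "positive_sizes X" and t: "t \<ge> 0"
  shows "((\<lambda>s. mean s X (\<lambda>Y. pairing Y (gfi_L \<beta> \<theta> \<gamma> f)))
    has_integral (mean t X (\<lambda>Y. pairing Y f) - pairing X f)) {0..t}"
proof -
  let ?g = "\<lambda>Y. pairing Y f" and ?Lg = "\<lambda>Y. gen Y (\<lambda>Z. pairing Z f)"
    and ?g' = "\<lambda>Y. pairing Y (gfi_L \<beta> \<theta> \<gamma> f)"
  define F where "F K s = (\<Sum>k<Suc K. jump_expect k s X ?g') - jump_expect K s X ?Lg" for K s
  have g': "poly_bounded ?g'" and Lg: "poly_bounded ?Lg" and g: "poly_bounded ?g"
    using poly_bounded_pairing classB_gfi_L poly_bounded_gen_pairing f by auto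
  obtain C1 r1 C2 r2 where b1: "size_bounded ?g' C1 r1" and b2: "size_bounded ?Lg C2 r2"
    using g' Lg unfolding poly_bounded_def by blast
  have "(F K has_integral ((\<Sum>k<Suc K. jump_expect k t X ?g) - (\<Sum>k<Suc K. jump_expect k 0 X ?g))) {0..t}" for K
    unfolding F_def
  proof (rule fundamental_theorem_of_calculus[OF t])
    fix x assume "x \<in> {0..t}"
    then have "((\<lambda>s. \<Sum>k<Suc K. jump_expect k s X ?g) has_real_derivative
        (\<Sum>k<Suc K. jump_expect k x X ?g') - jump_expect K x X ?Lg) (at x within {0..t})"
      by (intro has_field_derivative_subset[OF has_real_derivative_sum_jump_expect_pairing]) auto
    then show "((\<lambda>s. \<Sum>k<Suc K. jump_expect k s X ?g) has_vector_derivative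
        (\<Sum>k<Suc K. jump_expect k x X ?g') - jump_expect K x X ?Lg) (at x within {0..t})"
      by (simp add: has_real_derivative_iff_has_vector_derivative)
  qed
  then have integral: "(F K has_integral ((\<Sum>k<Suc K. jump_expect k t X ?g) - pairing X f)) {0..t}" for K
    by (simp only: sum_jump_expect_time_0)
  have "(\<lambda>_. C1 * exp (\<beta> * r1 * 2 powr (r1 - 1) * t) * total_size X powr r1
      + C2 * exp (\<beta> * r2 * 2 powr (r2 - 1) * t) * total_size X powr r2) integrable_on {0..t}"
    by (rule integrable_const_ivl)
  moreover have "\<forall>s\<in>{0..t}. norm (F K s) \<le> C1 * exp (\<beta> * r1 * 2 powr (r1 - 1) * t) * total_size X powr r1
      + C2 * exp (\<beta> * r2 * 2 powr (r2 - 1) * t) * total_size X powr r2" for K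
    unfolding F_def real_norm_def using abs_partial_forward_sum_le[OF X _ b1 b2] by blast
  moreover have "\<forall>s\<in>{0..t}. (\<lambda>K. F K s) \<longlonglongrightarrow> mean s X ?g'"
  proof
    fix s assume "s \<in> {0..t}"
    then have "(\<lambda>K. F K s) \<longlonglongrightarrow> mean s X ?g' - 0"
      unfolding F_def
      by (intro tendsto_diff LIMSEQ_partial_sums_mean g' X summable_LIMSEQ_zero summable_jump_expect[OF Lg X]) auto
    then show "(\<lambda>K. F K s) \<longlonglongrightarrow> mean s X ?g'"
      by simp
  qed
  moreover have "(\<lambda>K. (\<Sum>k<Suc K. jump_expect k t X ?g) - pairing X f) \<longlonglongrightarrow> mean t X ?g - pairing X f"
    by (intro tendsto_diff LIMSEQ_partial_sums_mean g X t tendsto_const)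
  ultimately show ?thesis
    by (rule has_integral_dominated_convergence[OF integral])
qed

lemma mean_pairing_eq_integral:
  "classB f \<Longrightarrow> positive_sizes X \<Longrightarrow> t \<ge> 0
    \<Longrightarrow> mean t X (\<lambda>Y. pairing Y f) = pairing X f + integral {0..t} (\<lambda>s. mean s X (\<lambda>Y. pairing Y (gfi_L \<beta> \<theta> \<gamma> f)))"
  using integral_unique[OF has_integral_mean_gfi_L] by simp

lemma continuous_on_mean_pairing:
  assumes f: "classB f" and X: "positive_sizes X"
  shows "continuous_on {0..} (\<lambda>s. mean s X (\<lambda>Y. pairing Y f))"
  unfolding continuous_on_eq_continuous_within
proof
  fix t :: real assume t: "t \<in> {0..}"
  let ?m = "\<lambda>s. mean s X (\<lambda>Y. pairing Y (gfi_L \<beta> \<theta> \<gamma> f))"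
  have "continuous_on {0..t+1} (\<lambda>s. pairing X f + integral {0..s} ?m)"
    using has_integral_mean_gfi_L[OF f X, of "t + 1"] t
    by (intro continuous_intros indefinite_integral_continuous_1) auto
  then have "continuous_on {0..t+1} (\<lambda>s. mean s X (\<lambda>Y. pairing Y f))"
    by (rule continuous_on_eq) (simp add: mean_pairing_eq_integral[OF f X])
  then have "continuous (at t within {0..t+1}) (\<lambda>s. mean s X (\<lambda>Y. pairing Y f))"
    using t by (simp add: continuous_on_eq_continuous_within)
  moreover have "at t within {0..t+1} = at t within {0..}"
    by (rule at_within_nhd[of _ "ball t 1"]) (auto simp: dist_real_def)
  ultimately show "continuous (at t within {0..}) (\<lambda>s. mean s X (\<lambda>Y. pairing Y f))"
    by simp
qed

lemma has_real_derivative_mean_pairing: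
  assumes f: "classB f" and X: "positive_sizes X" and t: "t \<ge> 0"
  shows "((\<lambda>s. mean s X (\<lambda>Y. pairing Y f)) has_real_derivative
    mean t X (\<lambda>Y. pairing Y (gfi_L \<beta> \<theta> \<gamma> f))) (at t within {0..})"
proof -
  let ?m = "\<lambda>s. mean s X (\<lambda>Y. pairing Y (gfi_L \<beta> \<theta> \<gamma> f))"
  have "((\<lambda>s. pairing X f + integral {0..s} ?m) has_real_derivative ?m t) (at t within {0..})"
    using has_real_derivative_integral_from_0[OF continuous_on_mean_pairing[OF classB_gfi_L[OF f] X] t]
    by (auto intro!: derivative_eq_intros)
  then show ?thesis
    by (rule has_field_derivative_transform_within[OF _ zero_less_one])
       (use t mean_pairing_eq_integral[OF f X] in auto)
qed


lemma mean_pairing_pos_neg: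
  assumes f: "classB f" and X: "positive_sizes X" and t: "t \<ge> 0"
  shows "mean t X (\<lambda>Y. pairing Y f)
    = mean t X (\<lambda>Y. pairing Y (pos_part f)) - mean t X (\<lambda>Y. pairing Y (neg_part f))"
proof -
  have "pairing Y f = 1 * pairing Y (pos_part f) + (- 1) * pairing Y (neg_part f)" for Y
    using pairing_linear[of Y 1 "pos_part f" "- 1" "neg_part f"] by (simp add: pos_part_minus_neg_part)
  then show ?thesis
    using mean_linear[OF poly_bounded_pairing[OF classB_pos_part[OF f]]
        poly_bounded_pairing[OF classB_neg_part[OF f]] X t, of 1 "- 1"]
    by simp
qed

lemma classB_mean_singleton:
  assumes f: "classB f" and t: "t \<ge> 0"
  shows "classB (\<lambda>z. mean t {#z#} (\<lambda>Y. pairing Y f))"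
proof -
  obtain C r where "r \<ge> 1" "C \<ge> 0" "\<And>n. n \<ge> 1 \<Longrightarrow> \<bar>f n\<bar> \<le> C * real n powr r"
    using classB_powr_bound[OF f] by metis
  from size_bounded_pairing[OF this] have "size_bounded (\<lambda>Y. pairing Y f) C r" .
  with abs_mean_le[OF positive_sizes_singleton t]
  have "\<bar>mean t {#n#} (\<lambda>Y. pairing Y f)\<bar> \<le> C * exp (\<beta> * r * 2 powr (r - 1) * t) * real n powr r"
    if "n \<ge> 1" for n
    using that by (simp add: total_size_def)
  with \<open>r \<ge> 1\<close> show ?thesis
    unfolding classB_def by (intro exI[of _ r]) auto
qed

lemma mean_pairing_add_time:
  assumes f: "classB f" and X: "positive_sizes X" and s: "s \<ge> 0" and t: "t \<ge> 0"
  shows "mean (s + t) X (\<lambda>Y. pairing Y f) = mean s X (\<lambda>Z. pairing Z (\<lambda>z. mean t {#z#} (\<lambda>Y. pairing Y f)))"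
proof -
  have nonneg: "mean (s + t) X (\<lambda>Y. pairing Y h) = mean s X (\<lambda>Z. pairing Z (\<lambda>z. mean t {#z#} (\<lambda>Y. pairing Y h)))"
    if h: "classB h" "\<And>m. 0 \<le> h m" for h
  proof -
    have "mean (s + t) X (\<lambda>Y. pairing Y h) = mean s X (\<lambda>Z. mean t Z (\<lambda>Y. pairing Y h))"
      using h by (intro mean_add_time_nonneg poly_bounded_pairing X s t pairing_nonneg) auto
    also have "\<dots> = mean s X (\<lambda>Z. pairing Z (\<lambda>z. mean t {#z#} (\<lambda>Y. pairing Y h)))"
      by (intro mean_cong X mean_pairing h(1) t)
    finally show ?thesis .
  qed
  let ?p = "\<lambda>z. mean t {#z#} (\<lambda>Y. pairing Y (pos_part f))"
    and ?n = "\<lambda>z. mean t {#z#} (\<lambda>Y. pairing Y (neg_part f))"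
  have "mean s X (\<lambda>Z. pairing Z (\<lambda>z. mean t {#z#} (\<lambda>Y. pairing Y f)))
      = mean s X (\<lambda>Z. 1 * pairing Z ?p + (- 1) * pairing Z ?n)"
  proof (rule mean_cong[OF X])
    fix Z assume Z: "positive_sizes Z"
    have "mean t {#z#} (\<lambda>Y. pairing Y f) = 1 * ?p z + (- 1) * ?n z" if "z \<in># Z" for z
      using mean_pairing_pos_neg[OF f positive_sizes_singleton[OF positive_sizes_member[OF Z that]] t]
      by simp
    then show "pairing Z (\<lambda>z. mean t {#z#} (\<lambda>Y. pairing Y f)) = 1 * pairing Z ?p + (- 1) * pairing Z ?n"
      unfolding pairing_linear[symmetric] by (rule pairing_cong)
  qed
  also have "\<dots> = mean s X (\<lambda>Z. pairing Z ?p) - mean s X (\<lambda>Z. pairing Z ?n)"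
    using mean_linear[OF poly_bounded_pairing poly_bounded_pairing X s, of ?p ?n 1 "- 1"]
      classB_mean_singleton classB_pos_part classB_neg_part f t
    by simp
  also have "\<dots> = mean (s + t) X (\<lambda>Y. pairing Y f)"
    using nonneg[OF classB_pos_part[OF f] pos_part_nonneg] nonneg[OF classB_neg_part[OF f] neg_part_nonneg]
      mean_pairing_pos_neg[OF f X] s t
    by simp
  finally show ?thesis ..
qed

lemma gfi_Mplus_eq_mean:
  assumes f: "classB f" "\<And>m. 0 \<le> f m" and t: "t \<ge> 0" and n: "n \<ge> 1"
  shows "gfi_Mplus \<beta> \<theta> \<gamma> f t n = ennreal (mean t {#n#} (\<lambda>Y. pairing Y f))"
  unfolding gfi_Mplus_eq_suminf[OF f(2) t] mean_def
  using f t positive_sizes_singleton[OF n]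
  by (intro suminf_ennreal2 jump_expect_nonneg pairing_nonneg summable_jump_expect poly_bounded_pairing) auto

lemma gfi_M_eq_mean:
  assumes f: "classB f" and t: "t \<ge> 0" and n: "n \<ge> 1"
  shows "gfi_M \<beta> \<theta> \<gamma> f t n = mean t {#n#} (\<lambda>Y. pairing Y f)"
proof -
  have "0 \<le> mean t {#n#} (\<lambda>Y. pairing Y h)" if "classB h" "\<And>m. 0 \<le> h m" for h
    using that positive_sizes_singleton[OF n] t
    by (intro mean_nonneg poly_bounded_pairing pairing_nonneg) auto
  then show ?thesis
    unfolding gfi_M_def mean_pairing_pos_neg[OF f positive_sizes_singleton[OF n] t]
    using gfi_Mplus_eq_mean[OF classB_pos_part[OF f] pos_part_nonneg t n]
      gfi_Mplus_eq_mean[OF classB_neg_part[OF f] neg_part_nonneg t n]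
      classB_pos_part[OF f] classB_neg_part[OF f] pos_part_nonneg neg_part_nonneg
    by simp
qed

lemma gfi_Mplus_powr_le:
  assumes r: "r \<ge> 1" and t: "t \<ge> 0" and n: "n \<ge> 1"
  shows "gfi_Mplus \<beta> \<theta> \<gamma> (\<lambda>m. real m powr r) t n
    \<le> ennreal (exp ((2 powr (r - 1) * r * \<beta> - \<theta>) * t) * real n powr r)"
proof -
  let ?B = "exp ((2 powr (r - 1) * r * \<beta> - \<theta>) * t) * size_moment r {#n#}"
  have bound: "(\<Sum>k<K. jump_expect k t {#n#} (size_moment r)) \<le> ?B" for K
    by (rule sum_jump_expect_size_moment_le[OF r t positive_sizes_singleton[OF n]])
  have nonneg: "0 \<le> jump_expect k t {#n#} (size_moment r)" for k
    using t size_moment_nonneg by (intro jump_expect_nonneg)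
  have summable: "summable (\<lambda>k. jump_expect k t {#n#} (size_moment r))"
    using bound[of "Suc _"] by (intro bounded_imp_summable[OF nonneg]) (simp add: lessThan_Suc_atMost)
  have "gfi_Mplus \<beta> \<theta> \<gamma> (\<lambda>m. real m powr r) t n = ennreal (\<Sum>k. jump_expect k t {#n#} (size_moment r))"
    unfolding gfi_Mplus_eq_suminf[OF powr_ge_zero t] size_moment_def[symmetric]
    by (rule suminf_ennreal2[OF nonneg summable])
  also have "\<dots> \<le> ennreal ?B"
    by (intro ennreal_leI suminf_le_const[OF summable bound])
  finally show ?thesis
    by (simp add: size_moment_def)
qed

lemma gfi_Mplus_parts_finite:
  assumes "classB f" "t \<ge> 0" "n \<ge> 1"
  shows "gfi_Mplus \<beta> \<theta> \<gamma> (pos_part f) t n < \<infinity> \<and> gfi_Mplus \<beta> \<theta> \<gamma> (neg_part f) t n < \<infinity>"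
  using gfi_Mplus_eq_mean[OF classB_pos_part pos_part_nonneg] gfi_Mplus_eq_mean[OF classB_neg_part neg_part_nonneg]
    assms by simp

lemma gfi_M_time_0: "classB f \<Longrightarrow> n \<ge> 1 \<Longrightarrow> gfi_M \<beta> \<theta> \<gamma> f 0 n = f n"
  by (simp add: gfi_M_eq_mean mean_time_0)

lemma classB_gfi_M:
  assumes f: "classB f" and t: "t \<ge> 0"
  shows "classB (gfi_M \<beta> \<theta> \<gamma> f t)"
proof -
  obtain p C where "p > 0" "\<forall>n\<ge>1. \<bar>mean t {#n#} (\<lambda>Y. pairing Y f)\<bar> \<le> C * real n powr p"
    using classB_mean_singleton[OF f t] unfolding classB_def by blast
  then show ?thesis
    unfolding classB_def using gfi_M_eq_mean[OF f t] by auto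
qed

lemma gfi_M_linear:
  assumes f: "classB f" and g: "classB g" and t: "t \<ge> 0" and n: "n \<ge> 1"
  shows "gfi_M \<beta> \<theta> \<gamma> (\<lambda>m. a * f m + b * g m) t n = a * gfi_M \<beta> \<theta> \<gamma> f t n + b * gfi_M \<beta> \<theta> \<gamma> g t n"
  unfolding gfi_M_eq_mean[OF classB_linear[OF f g] t n] gfi_M_eq_mean[OF f t n] gfi_M_eq_mean[OF g t n]
    pairing_linear
  by (rule mean_linear[OF poly_bounded_pairing[OF f] poly_bounded_pairing[OF g] positive_sizes_singleton[OF n] t])

lemma gfi_M_nonneg:
  assumes f: "classB f" "\<And>n. n \<ge> 1 \<Longrightarrow> f n \<ge> 0" and t: "t \<ge> 0" and n: "n \<ge> 1"
  shows "gfi_M \<beta> \<theta> \<gamma> f t n \<ge> 0"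
  unfolding gfi_M_eq_mean[OF f(1) t n] using f positive_sizes_member
  by (intro mean_nonneg poly_bounded_pairing positive_sizes_singleton n t pairing_nonneg) auto

lemma gfi_M_add_time:
  assumes f: "classB f" and s: "s \<ge> 0" and t: "t \<ge> 0" and n: "n \<ge> 1"
  shows "gfi_M \<beta> \<theta> \<gamma> f (s + t) n = gfi_M \<beta> \<theta> \<gamma> (gfi_M \<beta> \<theta> \<gamma> f t) s n"
proof -
  have "gfi_M \<beta> \<theta> \<gamma> f (s + t) n = mean s {#n#} (\<lambda>Z. pairing Z (\<lambda>z. mean t {#z#} (\<lambda>Y. pairing Y f)))"
    using gfi_M_eq_mean[OF f _ n, of "s + t"] mean_pairing_add_time[OF f positive_sizes_singleton[OF n] s t] s t
    by simp
  also have "\<dots> = mean s {#n#} (\<lambda>Z. pairing Z (gfi_M \<beta> \<theta> \<gamma> f t))"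
    using positive_sizes_member
    by (intro mean_cong positive_sizes_singleton n pairing_cong) (simp add: gfi_M_eq_mean[OF f t])
  also have "\<dots> = gfi_M \<beta> \<theta> \<gamma> (gfi_M \<beta> \<theta> \<gamma> f t) s n"
    by (rule gfi_M_eq_mean[OF classB_gfi_M[OF f t] s n, symmetric])
  finally show ?thesis .
qed

lemma has_real_derivative_gfi_M:
  assumes f: "classB f" and t: "t \<ge> 0" and n: "n \<ge> 1"
  shows "((\<lambda>\<tau>. gfi_M \<beta> \<theta> \<gamma> f \<tau> n) has_real_derivative gfi_M \<beta> \<theta> \<gamma> (gfi_L \<beta> \<theta> \<gamma> f) t n)
    (at t within {0..})"
  unfolding gfi_M_eq_mean[OF classB_gfi_L[OF f] t n]
  by (rule has_field_derivative_transform_within[OF has_real_derivative_mean_pairing[OF f positive_sizes_singleton[OF n] t]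
        zero_less_one])
     (use t gfi_M_eq_mean[OF f _ n] in auto)

end

theorem lemma4p1:
  fixes \<beta> \<theta> \<gamma> :: real
  assumes "\<beta> > 0" and "\<theta> > 0" and "\<gamma> > 0"
  shows
    "(\<forall>p::real. p \<ge> 1 \<longrightarrow> (\<forall>t\<ge>0. \<forall>n::nat\<ge>1.
        gfi_Mplus \<beta> \<theta> \<gamma> (\<lambda>m. real m powr p) t n
          \<le> ennreal (exp ((2 powr (p - 1) * p * \<beta> - \<theta>) * t) * real n powr p)))
   \<and> (\<forall>f. classB f \<longrightarrow> (\<forall>t\<ge>0. \<forall>n::nat\<ge>1.
        gfi_Mplus \<beta> \<theta> \<gamma> (pos_part f) t n < \<infinity> \<and> gfi_Mplus \<beta> \<theta> \<gamma> (neg_part f) t n < \<infinity>))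
   \<and> (\<forall>f. classB f \<longrightarrow> (\<forall>n::nat\<ge>1. gfi_M \<beta> \<theta> \<gamma> f 0 n = f n))
   \<and> (\<forall>t\<ge>0. \<forall>f. classB f \<longrightarrow> classB (gfi_M \<beta> \<theta> \<gamma> f t))
   \<and> (\<forall>t\<ge>0. \<forall>f g. \<forall>a b::real. classB f \<longrightarrow> classB g \<longrightarrow> (\<forall>n::nat\<ge>1.
        gfi_M \<beta> \<theta> \<gamma> (\<lambda>m. a * f m + b * g m) t n
          = a * gfi_M \<beta> \<theta> \<gamma> f t n + b * gfi_M \<beta> \<theta> \<gamma> g t n))
   \<and> (\<forall>t\<ge>0. \<forall>f. classB f \<longrightarrow> (\<forall>n::nat\<ge>1. f n \<ge> 0) \<longrightarrow>
        (\<forall>n::nat\<ge>1. gfi_M \<beta> \<theta> \<gamma> f t n \<ge> 0))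
   \<and> (\<forall>s\<ge>0. \<forall>t\<ge>0. \<forall>f. classB f \<longrightarrow> (\<forall>n::nat\<ge>1.
        gfi_M \<beta> \<theta> \<gamma> f (s + t) n = gfi_M \<beta> \<theta> \<gamma> (gfi_M \<beta> \<theta> \<gamma> f t) s n))
   \<and> (\<forall>f. classB f \<longrightarrow> classB (gfi_L \<beta> \<theta> \<gamma> f))
   \<and> (\<forall>f. classB f \<longrightarrow> (\<forall>t\<ge>0. \<forall>n::nat\<ge>1.
        ((\<lambda>\<tau>. gfi_M \<beta> \<theta> \<gamma> f \<tau> n) has_real_derivative gfi_M \<beta> \<theta> \<gamma> (gfi_L \<beta> \<theta> \<gamma> f) t n)
          (at t within {0..})))"
proof -
  interpret gfi \<beta> \<theta> \<gamma>
    using assms by unfold_locales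
  show ?thesis
    by (intro conjI allI impI gfi_Mplus_powr_le gfi_Mplus_parts_finite gfi_M_time_0 classB_gfi_M
        gfi_M_linear gfi_M_nonneg gfi_M_add_time classB_gfi_L has_real_derivative_gfi_M) auto
qed

end
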